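(* Let $1<p<p_0<\infty$ and let $f,g$ be nonnegative sequences on $\mathbb{Z}_+$. Assume there is a positive increasing function $\varphi_{p_0}$ on $[1,\infty)$ such that for every $w_0\in\mathcal{A}_{p_0}$, $$\Big(\sum_{k=1}^\infty w_0(k)f(k)^{p_0}\Big)^{1/p_0}\le\varphi_{p_0}\big([w_0]_{\mathcal{A}_{p_0}}\big)\Big(\sum_{k=1}^\infty w_0(k)g(k)^{p_0}\Big)^{1/p_0}.$$ Then for every $w\in\mathcal{A}_p$ with $f\in\ell^p(w)$, $$\Big(\sum_{k=1}^\infty w(k)f(k)^{p}\Big)^{1/p}\le 2^{\frac{p_0-p}{p_0}}\,\varphi_{p_0}\Big(\big(2\|\mathcal{M}\|_{\ell^p(w)}\big)^{p_0-p}[w]_{\mathcal{A}_p}\Big)\Big(\sum_{k=1}^\infty w(k)g(k)^{p}\Big)^{1/p}.$$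
   Context: Throughout, a weight is a sequence $w=\{w(k)\}_{k\ge 1}$ of strictly positive real numbers indexed by $\mathbb{Z}_+=\{1,2,\dots\}$. For $1\le q<\infty$ and a weight $v$, $\ell^q(v)$ is the space of real sequences $f$ with $\|f\|_{\ell^q(v)}=\big(\sum_{k\ge1}v(k)|f(k)|^q\big)^{1/q}<\infty$. The discrete Hardy–Littlewood maximal operator is $\mathcal{M}f(k)=\sup_{n\ge k}\frac1n\sum_{j=1}^n|f(j)|$, $k\in\mathbb{Z}_+$. For $1<q<\infty$, a weight $w$ belongs to $\mathcal{A}_q$ iff $[w]_{\mathcal{A}_q}:=\sup_{n\ge1}\big(\frac1n\sum_{k=1}^n w(k)\big)\big(\frac1n\sum_{k=1}^n w(k)^{-1/(q-1)}\big)^{q-1}<\infty$. $\|\mathcal{M}\|_{\ell^q(v)}$ denotes the operator norm $\sup\{\|\mathcal{M}f\|_{\ell^q(v)}:\|f\|_{\ell^q(v)}\le1\}$; it is known to be finite when $v\in\mathcal{A}_q$. *)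

theory Defs
  imports "HOL-Analysis.Analysis"
begin

text \<open>Sequences and weights on Z_+ = {1,2,...} are modelled as functions nat => real;
  the value at index 0 is ignored throughout.\<close>

definition is_weight :: "(nat \<Rightarrow> real) \<Rightarrow> bool" where
  "is_weight w \<longleftrightarrow> (\<forall>k\<ge>1. w k > 0)"

definition wnorm :: "real \<Rightarrow> (nat \<Rightarrow> real) \<Rightarrow> (nat \<Rightarrow> real) \<Rightarrow> ereal" where
  "wnorm q v f =
     (if summable (\<lambda>k. v (Suc k) * \<bar>f (Suc k)\<bar> powr q)
      then ereal ((\<Sum>k. v (Suc k) * \<bar>f (Suc k)\<bar> powr q) powr (1 / q))
      else \<infinity>)"

definition avg :: "(nat \<Rightarrow> real) \<Rightarrow> nat \<Rightarrow> real" where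
  "avg f n = (\<Sum>j=1..n. \<bar>f j\<bar>) / real n"

definition maxop :: "(nat \<Rightarrow> real) \<Rightarrow> nat \<Rightarrow> real" where
  "maxop f k = (SUP n\<in>{k..}. avg f n)"

text \<open>Operator norm of M on l^q(v) (extended real; infinite if M f is not
  even finite-valued for some admissible f).\<close>
definition maxop_norm :: "real \<Rightarrow> (nat \<Rightarrow> real) \<Rightarrow> ereal" where
  "maxop_norm q v =
     (SUP f\<in>{f. wnorm q v f \<le> 1}.
        (if (\<forall>k\<ge>1. bdd_above (avg f ` {k..})) then wnorm q v (maxop f) else \<infinity>))"

definition Ap_const :: "real \<Rightarrow> (nat \<Rightarrow> real) \<Rightarrow> ereal" where
  "Ap_const q w =
     (SUP n\<in>{1..}. ereal (((\<Sum>k=1..n. w k) / real n) *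
        ((\<Sum>k=1..n. w k powr (- 1 / (q - 1))) / real n) powr (q - 1)))"

definition in_Ap :: "real \<Rightarrow> (nat \<Rightarrow> real) \<Rightarrow> bool" where
  "in_Ap q w \<longleftrightarrow> is_weight w \<and> Ap_const q w < \<infinity>"

end

(*
  Rubio de Francia extrapolation.  Normalise g to h = |g| / |g|_{p,w} and iterate the maximal
  operator: R = sum_i M^i h / (2 |M|)^i converges in l^p(w) with norm at most 2, dominates h and
  satisfies M R <= 2 |M| R.  The weight w0 = w R^(p-p0) then lies in A_{p0} with
  [w0] <= (2 |M|)^(p0-p) [w]: the lower bound for R controls the averages of w0, and Hoelder's
  inequality with exponent (p-1)/(p0-1) those of its dual weight.  Applying the hypothesis to w0,
  the bound |g| <= |g|_{p,w} R turns the right-hand side into the l^p(w) norm of g, and Hoelder's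
  inequality with exponent p/p0 compares the left-hand side with the l^{p0}(w0) norm of f.

  That |M| is finite on l^p(w) is part of the argument: M is dominated by the Hardy-type operator
  sum_j |f j| / max j k, which is bounded blockwise over dyadic blocks by a Schur test, the A_p
  condition forcing w and its dual weight to grow geometrically along dyadic segments.
*)

theory Submission
  imports Defs
begin

lemma powr_mult_le_scaled_convex_comb:
  fixes a b A B t :: real
  assumes "0 \<le> a" "0 \<le> b" "0 < A" "0 < B" "0 < t" "t < 1"
  shows "a powr t * b powr (1 - t) \<le> A powr t * B powr (1 - t) * (t * (a / A) + (1 - t) * (b / B))"
proof (cases "a = 0 \<or> b = 0")
  case False
  then have "0 < a" "0 < b" using assms by auto
  then have "(a / A) powr t * (b / B) powr (1 - t) \<le> t * (a / A) + (1 - t) * (b / B)"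
    using Youngs_inequality_0[of t "1 - t" "a / A" "b / B"] assms by auto
  moreover have "(a / A) powr t * (b / B) powr (1 - t) = a powr t * b powr (1 - t) / (A powr t * B powr (1 - t))"
    using assms by (simp add: powr_divide)
  ultimately show ?thesis using assms by (simp add: divide_le_eq mult.commute)
qed (use assms in auto)

lemma holder_sum_powr:
  fixes x y :: "'a \<Rightarrow> real"
  assumes "finite I" "\<And>i. i \<in> I \<Longrightarrow> x i \<ge> 0" "\<And>i. i \<in> I \<Longrightarrow> y i \<ge> 0"
    and "0 < t" "t < 1"
  shows "(\<Sum>i\<in>I. x i powr t * y i powr (1 - t)) \<le> (\<Sum>i\<in>I. x i) powr t * (\<Sum>i\<in>I. y i) powr (1 - t)"
proof -
  define X where "X = (\<Sum>i\<in>I. x i)"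
  define Y where "Y = (\<Sum>i\<in>I. y i)"
  have "X \<ge> 0" "Y \<ge> 0" unfolding X_def Y_def using assms by (simp_all add: sum_nonneg)
  show ?thesis
  proof (cases "X = 0 \<or> Y = 0")
    case True
    then have "\<forall>i\<in>I. x i powr t * y i powr (1 - t) = 0"
      using assms sum_nonneg_eq_0_iff[of I x] sum_nonneg_eq_0_iff[of I y] unfolding X_def Y_def
      by auto
    then have "(\<Sum>i\<in>I. x i powr t * y i powr (1 - t)) = 0" by (intro sum.neutral) auto
    then show ?thesis unfolding X_def[symmetric] Y_def[symmetric] using \<open>X \<ge> 0\<close> \<open>Y \<ge> 0\<close> by simp
  next
    case False
    with \<open>X \<ge> 0\<close> \<open>Y \<ge> 0\<close> have "X > 0" "Y > 0" by auto
    have "(\<Sum>i\<in>I. x i powr t * y i powr (1 - t))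
        \<le> (\<Sum>i\<in>I. X powr t * Y powr (1 - t) * (t * (x i / X) + (1 - t) * (y i / Y)))"
      using assms \<open>X > 0\<close> \<open>Y > 0\<close> by (intro sum_mono powr_mult_le_scaled_convex_comb) auto
    also have "\<dots> = X powr t * Y powr (1 - t) * (t * X / X + (1 - t) * Y / Y)"
      unfolding X_def Y_def
      by (simp add: sum_distrib_left sum.distrib sum_divide_distrib[symmetric]
          flip: sum_distrib_left times_divide_eq_right)
    also have "\<dots> = X powr t * Y powr (1 - t)" using \<open>X > 0\<close> \<open>Y > 0\<close> by simp
    finally show ?thesis unfolding X_def Y_def .
  qed
qed

lemma powr_conjugate_mult:
  fixes a b p :: real
  assumes "a \<ge> 0" "b \<ge> 0" "p > 0"
  shows "(a powr (1/p) * b powr (1 - 1/p)) powr p = a * b powr (p - 1)"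
proof -
  have "(a powr (1/p) * b powr (1 - 1/p)) powr p = a powr (1/p * p) * b powr ((1 - 1/p) * p)"
    using assms by (simp add: powr_mult powr_powr)
  also have "1/p * p = 1" "(1 - 1/p) * p = p - 1" using assms by (auto simp: field_simps)
  ultimately show ?thesis using assms by simp
qed

lemma weighted_sum_powr_le:
  fixes c a :: "'a \<Rightarrow> real"
  assumes "finite I" "\<And>i. i \<in> I \<Longrightarrow> c i \<ge> 0" "\<And>i. i \<in> I \<Longrightarrow> a i \<ge> 0" "p > 1"
  shows "(\<Sum>i\<in>I. c i * a i) powr p \<le> (\<Sum>i\<in>I. c i) powr (p - 1) * (\<Sum>i\<in>I. c i * a i powr p)"
proof -
  have split: "c i * a i = (c i * a i powr p) powr (1/p) * c i powr (1 - 1/p)" if "i \<in> I" for i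
  proof (cases "c i = 0")
    case False
    then have "c i > 0" using assms(2)[OF that] by simp
    then have "c i powr (1/p) * c i powr (1 - 1/p) = c i" by (simp flip: powr_add)
    moreover have "(c i * a i powr p) powr (1/p) = c i powr (1/p) * a i"
      using assms that \<open>c i > 0\<close> by (simp add: powr_mult powr_powr)
    ultimately show ?thesis by (simp add: algebra_simps)
  qed simp
  have "(\<Sum>i\<in>I. c i * a i) = (\<Sum>i\<in>I. (c i * a i powr p) powr (1/p) * c i powr (1 - 1/p))"
    using split by (rule sum.cong[OF refl])
  also have "\<dots> \<le> (\<Sum>i\<in>I. c i * a i powr p) powr (1/p) * (\<Sum>i\<in>I. c i) powr (1 - 1/p)"
    using assms by (intro holder_sum_powr) auto
  finally have "(\<Sum>i\<in>I. c i * a i) \<le> \<dots>" .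
  then have "(\<Sum>i\<in>I. c i * a i) powr p
      \<le> ((\<Sum>i\<in>I. c i * a i powr p) powr (1/p) * (\<Sum>i\<in>I. c i) powr (1 - 1/p)) powr p"
    using assms by (intro powr_mono2) (auto intro!: sum_nonneg)
  also have "\<dots> = (\<Sum>i\<in>I. c i * a i powr p) * (\<Sum>i\<in>I. c i) powr (p - 1)"
    using assms by (intro powr_conjugate_mult) (auto intro!: sum_nonneg)
  finally show ?thesis by (simp add: mult.commute)
qed

lemma le_powr_inverse_of_powr_le:
  fixes x y p :: real
  assumes "0 \<le> x" "0 < p" "x powr p \<le> y"
  shows "x \<le> y powr (1 / p)"
proof -
  have "x = (x powr p) powr (1 / p)" using assms by (simp add: powr_powr)
  also have "\<dots> \<le> y powr (1 / p)" using assms by (intro powr_mono2) auto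
  finally show ?thesis .
qed

lemma le_powr_of_powr_inverse_le:
  fixes x y p :: real
  assumes "0 \<le> x" "0 < p" "x powr (1 / p) \<le> y"
  shows "x \<le> y powr p"
proof -
  have "x = (x powr (1 / p)) powr p" using assms by (simp add: powr_powr)
  also have "\<dots> \<le> y powr p" using assms by (intro powr_mono2) auto
  finally show ?thesis .
qed

lemma power_powr: "(x::real) \<ge> 0 \<Longrightarrow> (x ^ n) powr a = (x powr a) ^ n"
  by (induction n) (simp_all add: powr_mult)

lemma le_power_mult_of_step:
  fixes a :: "nat \<Rightarrow> real"
  assumes step: "\<And>i. a i \<le> r * a (Suc i)" and "r \<ge> 0" and "i \<le> m"
  shows "a i \<le> r ^ (m - i) * a m"
  using \<open>i \<le> m\<close>
proof (induction m rule: dec_induct)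
  case (step n)
  have "a i \<le> r ^ (n - i) * a n" by (rule step.IH)
  also have "\<dots> \<le> r ^ (n - i) * (r * a (Suc n))"
    using assms(1,2) by (intro mult_left_mono) auto
  also have "\<dots> = r ^ (Suc n - i) * a (Suc n)"
    using step.hyps by (simp add: Suc_diff_le)
  finally show ?case .
qed simp

lemma sum_power_le_geometric:
  fixes r :: real
  assumes "0 \<le> r" "r < 1" "finite J"
  shows "(\<Sum>j\<in>J. r ^ j) \<le> 1 / (1 - r)"
proof -
  have "(\<Sum>j\<in>J. r ^ j) \<le> (\<Sum>j. r ^ j)"
    using assms by (intro sum_le_suminf summable_geometric) auto
  then show ?thesis using assms suminf_geometric[of r] by simp
qed

lemma sum_power_dist_le:
  fixes r :: real
  assumes "0 \<le> r" "r < 1" "finite I"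
  shows "(\<Sum>i\<in>I. r ^ (max m i - min m i)) \<le> 2 / (1 - r)"
proof -
  let ?I1 = "{i\<in>I. i \<le> m}" and ?I2 = "{i\<in>I. m < i}"
  have "I = ?I1 \<union> ?I2" by auto
  then have "(\<Sum>i\<in>I. r ^ (max m i - min m i))
      = (\<Sum>i\<in>?I1. r ^ (max m i - min m i)) + (\<Sum>i\<in>?I2. r ^ (max m i - min m i))"
    using assms by (metis (no_types, lifting) finite_Un sum.union_disjoint disjoint_iff mem_Collect_eq not_less)
  also have "(\<Sum>i\<in>?I1. r ^ (max m i - min m i)) = (\<Sum>j\<in>(\<lambda>i. m - i) ` ?I1. r ^ j)"
    by (subst sum.reindex) (auto simp: inj_on_def intro!: sum.cong)
  also have "\<dots> \<le> 1 / (1 - r)" using assms by (intro sum_power_le_geometric) auto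
  also have "(\<Sum>i\<in>?I2. r ^ (max m i - min m i)) = (\<Sum>j\<in>(\<lambda>i. i - m) ` ?I2. r ^ j)"
    by (subst sum.reindex) (auto simp: inj_on_def intro!: sum.cong)
  also have "\<dots> \<le> 1 / (1 - r)" using assms by (intro sum_power_le_geometric) auto
  finally show ?thesis by simp
qed

definition lp_summable :: "real \<Rightarrow> (nat \<Rightarrow> real) \<Rightarrow> (nat \<Rightarrow> real) \<Rightarrow> bool" where
  "lp_summable q v f \<longleftrightarrow> summable (\<lambda>k. v (Suc k) * \<bar>f (Suc k)\<bar> powr q)"

definition lp_sum :: "real \<Rightarrow> (nat \<Rightarrow> real) \<Rightarrow> (nat \<Rightarrow> real) \<Rightarrow> real" where
  "lp_sum q v f = (\<Sum>k. v (Suc k) * \<bar>f (Suc k)\<bar> powr q)"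

lemma wnorm_eq: "wnorm q v f = (if lp_summable q v f then ereal (lp_sum q v f powr (1/q)) else \<infinity>)"
  unfolding wnorm_def lp_summable_def lp_sum_def by simp

lemma wnorm_nonneg: "0 \<le> wnorm q v f"
  by (simp add: wnorm_eq)

lemma sum_atLeast1_lessThan_Suc: "(\<Sum>j\<in>{1..<Suc n}. g j) = (\<Sum>j<n. g (Suc j))"
  by (metis One_nat_def atLeast0LessThan sum.shift_bounds_Suc_ivl)

lemma lp_sum_nonneg:
  "(\<And>k. k \<ge> 1 \<Longrightarrow> v k \<ge> 0) \<Longrightarrow> lp_summable q v f \<Longrightarrow> lp_sum q v f \<ge> 0"
  unfolding lp_sum_def lp_summable_def by (intro suminf_nonneg) auto

lemma partial_sum_le_lp_sum:
  assumes "lp_summable q v f" "\<And>k. k \<ge> 1 \<Longrightarrow> v k \<ge> 0"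
  shows "(\<Sum>j\<in>{1..<n}. v j * \<bar>f j\<bar> powr q) \<le> lp_sum q v f"
proof (cases n)
  case (Suc m)
  have "(\<Sum>j\<in>{1..<n}. v j * \<bar>f j\<bar> powr q) = (\<Sum>j<m. v (Suc j) * \<bar>f (Suc j)\<bar> powr q)"
    unfolding Suc by (rule sum_atLeast1_lessThan_Suc)
  also have "\<dots> \<le> lp_sum q v f"
    using assms unfolding lp_sum_def lp_summable_def by (intro sum_le_suminf) auto
  finally show ?thesis .
qed (use assms lp_sum_nonneg in auto)

lemma lp_sum_le_of_partial_sums_le:
  assumes "\<And>k. k \<ge> 1 \<Longrightarrow> v k \<ge> 0"
    and "\<And>n. (\<Sum>j\<in>{1..<n}. v j * \<bar>f j\<bar> powr q) \<le> B"
  shows "lp_summable q v f" "lp_sum q v f \<le> B"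
proof -
  have bound: "(\<Sum>k<n. v (Suc k) * \<bar>f (Suc k)\<bar> powr q) \<le> B" for n
    using assms(2)[of "Suc n"] unfolding sum_atLeast1_lessThan_Suc .
  show "lp_summable q v f" unfolding lp_summable_def
  proof (rule bounded_imp_summable)
    show "(\<Sum>k\<le>n. v (Suc k) * \<bar>f (Suc k)\<bar> powr q) \<le> B" for n
      using bound[of "Suc n"] by (simp add: lessThan_Suc_atMost)
  qed (use assms(1) in simp)
  then show "lp_sum q v f \<le> B" unfolding lp_sum_def lp_summable_def
    by (intro suminf_le_const bound)
qed

lemma lp_sum_divide:
  assumes "t > 0" "lp_summable q v f"
  shows "lp_summable q v (\<lambda>k. f k / t)" "lp_sum q v (\<lambda>k. f k / t) = lp_sum q v f / t powr q"
proof -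
  have *: "v (Suc k) * \<bar>f (Suc k) / t\<bar> powr q = v (Suc k) * \<bar>f (Suc k)\<bar> powr q / t powr q" for k
    using assms by (simp add: powr_divide)
  show "lp_summable q v (\<lambda>k. f k / t)"
    using assms unfolding lp_summable_def * by (intro summable_divide) auto
  show "lp_sum q v (\<lambda>k. f k / t) = lp_sum q v f / t powr q"
    using assms unfolding lp_summable_def lp_sum_def * by (intro suminf_divide) auto
qed

lemma lp_sum_eq_0_iff:
  assumes "lp_summable q v f" "\<And>k. k \<ge> 1 \<Longrightarrow> v k > 0"
  shows "lp_sum q v f = 0 \<longleftrightarrow> (\<forall>k\<ge>1. f k = 0)"
proof -
  have "lp_sum q v f = 0 \<longleftrightarrow> (\<forall>n. v (Suc n) * \<bar>f (Suc n)\<bar> powr q = 0)"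
    using assms unfolding lp_sum_def lp_summable_def
    by (intro suminf_eq_zero_iff) (auto intro!: mult_nonneg_nonneg less_imp_le[OF assms(2)])
  also have "\<dots> \<longleftrightarrow> (\<forall>n. f (Suc n) = 0)"
  proof -
    have "v (Suc n) * \<bar>f (Suc n)\<bar> powr q = 0 \<longleftrightarrow> f (Suc n) = 0" for n
      using assms(2)[of "Suc n"] by simp
    then show ?thesis by simp
  qed
  also have "\<dots> \<longleftrightarrow> (\<forall>k\<ge>1. f k = 0)"
    by (auto dest: Suc_le_D)
  finally show ?thesis .
qed

lemma lp_sum_zero:
  assumes "\<forall>k\<ge>1. f k = 0"
  shows "lp_summable q v f" "lp_sum q v f = 0"
proof -
  have "(\<lambda>k. v (Suc k) * \<bar>f (Suc k)\<bar> powr q) = (\<lambda>_. 0)" using assms by auto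
  then show "lp_summable q v f" "lp_sum q v f = 0" unfolding lp_summable_def lp_sum_def by simp_all
qed

lemma lp_sum_mono:
  assumes "\<And>k. k \<ge> 1 \<Longrightarrow> v k \<ge> 0" "\<And>k. k \<ge> 1 \<Longrightarrow> \<bar>f k\<bar> \<le> \<bar>g k\<bar>" "lp_summable q v g" "0 \<le> q"
  shows "lp_summable q v f" "lp_sum q v f \<le> lp_sum q v g"
proof -
  have "(\<Sum>j\<in>{1..<n}. v j * \<bar>f j\<bar> powr q) \<le> lp_sum q v g" for n
  proof -
    have "(\<Sum>j\<in>{1..<n}. v j * \<bar>f j\<bar> powr q) \<le> (\<Sum>j\<in>{1..<n}. v j * \<bar>g j\<bar> powr q)"
      using assms by (intro sum_mono mult_left_mono powr_mono2) auto
    also have "\<dots> \<le> lp_sum q v g" using assms by (intro partial_sum_le_lp_sum) auto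
    finally show ?thesis .
  qed
  note bound = this
  show "lp_summable q v f" "lp_sum q v f \<le> lp_sum q v g"
    using lp_sum_le_of_partial_sums_le[where v=v, OF assms(1) bound] by auto
qed

lemma vanishing_of_weighted_bound:
  assumes "wnorm q (\<lambda>_. 1) f \<le> ereal c * wnorm q (\<lambda>_. 1) g" "\<forall>k\<ge>1. g k = 0"
  shows "\<forall>k\<ge>1. f k = 0"
proof -
  have "wnorm q (\<lambda>_. 1) g = 0" using lp_sum_zero[OF assms(2)] by (simp add: wnorm_eq)
  then have "wnorm q (\<lambda>_. 1) f \<le> 0" using assms(1) by simp
  then have f: "lp_summable q (\<lambda>_. 1) f" and "lp_sum q (\<lambda>_. 1) f powr (1 / q) \<le> 0"
    by (auto simp: wnorm_eq split: if_splits)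
  then have "lp_sum q (\<lambda>_. 1) f = 0"
    using lp_sum_nonneg[of "\<lambda>_. 1" q f] by simp
  then show ?thesis using lp_sum_eq_0_iff[OF f] by simp
qed

section \<open>\<open>A\<^sub>p\<close> weights\<close>

definition dual_weight :: "real \<Rightarrow> (nat \<Rightarrow> real) \<Rightarrow> nat \<Rightarrow> real" where
  "dual_weight q w k = w k powr (- 1 / (q - 1))"

lemma Ap_average_le_Ap_const:
  "n \<ge> 1 \<Longrightarrow> ereal ((sum w {1..n} / real n) * (sum (dual_weight q w) {1..n} / real n) powr (q - 1))
     \<le> Ap_const q w"
  unfolding Ap_const_def dual_weight_def by (intro SUP_upper) auto

lemma Ap_const_ge_1:
  assumes "is_weight w" "q > 1"
  shows "Ap_const q w \<ge> 1"
proof -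
  have "w 1 > 0" using assms unfolding is_weight_def by auto
  moreover have "(w 1 powr (- 1 / (q - 1))) powr (q - 1) = w 1 powr (-1)"
    using assms by (simp add: powr_powr)
  ultimately have "(sum w {1..1} / real 1) * (sum (dual_weight q w) {1..1} / real 1) powr (q - 1) = 1"
    by (simp add: dual_weight_def powr_minus)
  then show ?thesis using Ap_average_le_Ap_const[of 1 w q] by (simp add: one_ereal_def)
qed

lemma const_in_Ap: "q > 1 \<Longrightarrow> in_Ap q (\<lambda>_. 1)"
  unfolding in_Ap_def is_weight_def Ap_const_def
  by (auto intro!: le_less_trans[OF SUP_least[of _ _ 1]])

lemma dual_weight_powr_conj:
  assumes "w k > 0" "p > 1"
  shows "dual_weight p w k powr (1 - 1/p) = w k powr (- (1/p))"
proof -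
  have "dual_weight p w k powr (1 - 1/p) = w k powr (- 1 / (p - 1) * (1 - 1/p))"
    unfolding dual_weight_def using assms by (simp add: powr_powr)
  also have "- 1 / (p - 1) * (1 - 1/p) = - (1/p)" using assms by (simp add: field_simps)
  finally show ?thesis .
qed

lemma card_powr_le_weight_dual:
  assumes "finite I" "\<And>k. k \<in> I \<Longrightarrow> w k > 0" "p > 1"
  shows "real (card I) powr p \<le> sum w I * sum (dual_weight p w) I powr (p - 1)"
proof -
  have "w k powr (1/p) * dual_weight p w k powr (1 - 1/p) = 1" if "k \<in> I" for k
    using assms(2)[OF that] assms(3) by (simp add: dual_weight_powr_conj flip: powr_add)
  then have "real (card I) = (\<Sum>k\<in>I. w k powr (1/p) * dual_weight p w k powr (1 - 1/p))"
    by simp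
  also have "\<dots> \<le> sum w I powr (1/p) * sum (dual_weight p w) I powr (1 - 1/p)"
    using assms by (intro holder_sum_powr) (auto simp: dual_weight_def less_imp_le)
  finally have "real (card I) powr p \<le> (sum w I powr (1/p) * sum (dual_weight p w) I powr (1 - 1/p)) powr p"
    using assms by (intro powr_mono2) auto
  also have "\<dots> = sum w I * sum (dual_weight p w) I powr (p - 1)"
    using assms by (intro powr_conjugate_mult sum_nonneg) (auto simp: dual_weight_def less_imp_le)
  finally show ?thesis .
qed

section \<open>Dyadic blocks and a Hardy-type operator\<close>

lemma one_less_two_power_Suc: "1 < (2::nat) ^ Suc i"
  by (rule power_gt1) simp

definition dyadic_block :: "nat \<Rightarrow> nat set" where
  "dyadic_block i = {2^i..<2^Suc i}"

definition dyadic_segment :: "nat \<Rightarrow> nat set" where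
  "dyadic_segment i = {1..<2^Suc i}"

lemma sum_dyadic_blocks:
  fixes g :: "nat \<Rightarrow> 'a::comm_monoid_add"
  shows "(\<Sum>k\<in>{1..<2^n}. g k) = (\<Sum>i<n. \<Sum>k\<in>dyadic_block i. g k)"
proof (induction n)
  case (Suc n)
  have "(\<Sum>k\<in>{1..<2^Suc n}. g k) = (\<Sum>k\<in>{1..<2^n}. g k) + (\<Sum>k\<in>dyadic_block n. g k)"
    unfolding dyadic_block_def by (rule sum.atLeastLessThan_concat[symmetric]) auto
  then show ?case using Suc by simp
qed simp

lemma dyadic_block_ge_1: "k \<in> dyadic_block i \<Longrightarrow> 1 \<le> k"
  unfolding dyadic_block_def using one_le_power[of "2::nat" i] by auto

lemma finite_dyadic_block [simp]: "finite (dyadic_block i)"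
  and finite_dyadic_segment [simp]: "finite (dyadic_segment i)"
  by (simp_all add: dyadic_block_def dyadic_segment_def)

lemma dyadic_block_nonempty: "dyadic_block i \<noteq> {}"
  unfolding dyadic_block_def by simp

lemma card_dyadic_block: "card (dyadic_block i) = 2^i"
  unfolding dyadic_block_def by simp

lemma dyadic_block_subset_segment: "dyadic_block i \<subseteq> dyadic_segment i"
  unfolding dyadic_block_def dyadic_segment_def using one_le_power[of "2::nat" i] by auto

lemma sum_dyadic_segment_Suc:
  "sum g (dyadic_segment (Suc i)) = sum g (dyadic_segment i) + sum g (dyadic_block (Suc i))"
  unfolding dyadic_segment_def dyadic_block_def by (rule sum.atLeastLessThan_concat[symmetric]) auto

lemma dyadic_segment_eq: "dyadic_segment i = {1..2^Suc i - 1}"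
  unfolding dyadic_segment_def by auto

lemma two_power_max_le:
  assumes "j \<in> dyadic_block i" "k \<in> dyadic_block m"
  shows "(2::nat) ^ max m i \<le> max j k"
  using assms by (cases "m \<le> i") (auto simp: dyadic_block_def max_def)

(* Dominates the maximal function (avg_le_hardy_sum) and, being linear in |f|, can be
   estimated block by block. *)
definition hardy_sum :: "(nat \<Rightarrow> real) \<Rightarrow> nat \<Rightarrow> nat \<Rightarrow> real" where
  "hardy_sum f L k = (\<Sum>j\<in>{1..<L}. \<bar>f j\<bar> / real (max j k))"

lemma hardy_sum_nonneg: "0 \<le> hardy_sum f L k"
  unfolding hardy_sum_def by (intro sum_nonneg) auto

lemma hardy_sum_le_dyadic:
  assumes "k \<in> dyadic_block m"
  shows "hardy_sum f (2^L) k \<le> (\<Sum>i<L. (\<Sum>j\<in>dyadic_block i. \<bar>f j\<bar>) / real (2 ^ max m i))"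
proof -
  have "hardy_sum f (2^L) k = (\<Sum>i<L. \<Sum>j\<in>dyadic_block i. \<bar>f j\<bar> / real (max j k))"
    unfolding hardy_sum_def by (rule sum_dyadic_blocks)
  also have "\<dots> \<le> (\<Sum>i<L. \<Sum>j\<in>dyadic_block i. \<bar>f j\<bar> / real (2 ^ max m i))"
  proof (intro sum_mono divide_left_mono)
    fix i j assume "j \<in> dyadic_block i"
    then show "real (2 ^ max m i) \<le> real (max j k)"
      using two_power_max_le[OF _ assms] of_nat_mono by blast
    show "0 < real (max j k) * real (2 ^ max m i)"
      using dyadic_block_ge_1[OF \<open>j \<in> dyadic_block i\<close>] by simp
  qed simp
  finally show ?thesis by (simp add: sum_divide_distrib)
qed

lemma avg_nonneg: "0 \<le> avg f n"
  unfolding avg_def by (intro divide_nonneg_nonneg sum_nonneg) auto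

lemma avg_le_maxop: "bdd_above (avg f ` {k..}) \<Longrightarrow> k \<le> n \<Longrightarrow> avg f n \<le> maxop f k"
  unfolding maxop_def by (rule cSUP_upper) auto

lemma maxop_nonneg: "bdd_above (avg f ` {k..}) \<Longrightarrow> 0 \<le> maxop f k"
  using avg_le_maxop[of f k k] avg_nonneg[of f k] by simp

lemma avg_le_hardy_sum:
  assumes "1 \<le> k" "k \<le> n"
  shows "avg f n \<le> hardy_sum f (Suc n) k"
proof -
  have "avg f n = (\<Sum>j\<in>{1..<Suc n}. \<bar>f j\<bar> / real n)"
    unfolding avg_def by (simp add: sum_divide_distrib atLeastLessThanSuc_atLeastAtMost)
  also have "\<dots> \<le> hardy_sum f (Suc n) k"
    unfolding hardy_sum_def using assms by (intro sum_mono divide_left_mono) auto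
  finally show ?thesis .
qed

lemma incseq_hardy_sum: "incseq (\<lambda>L. hardy_sum f L k)"
  unfolding incseq_def hardy_sum_def by (auto intro!: sum_mono2)

lemma avg_divide: "avg (\<lambda>k. f k / t) n = avg f n / \<bar>t\<bar>"
  unfolding avg_def by (simp add: sum_divide_distrib[symmetric])

lemma maxop_le_mult_maxop_divide:
  assumes "0 < t" "bdd_above (avg (\<lambda>k. f k / t) ` {k..})"
  shows "maxop f k \<le> t * maxop (\<lambda>k. f k / t) k"
  unfolding maxop_def
proof (rule cSUP_least)
  fix n assume "n \<in> {k..}"
  then have "avg f n / t \<le> maxop (\<lambda>k. f k / t) k"
    using avg_le_maxop[OF assms(2)] assms(1) by (simp add: avg_divide)
  then show "avg f n \<le> t * (SUP n\<in>{k..}. avg (\<lambda>k. f k / t) n)"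
    using assms(1) by (simp add: maxop_def pos_divide_le_eq mult.commute)
qed simp

section \<open>Boundedness of the maximal operator\<close>

locale Ap_weight =
  fixes p :: real and w :: "nat \<Rightarrow> real"
  assumes p_gt_1: "1 < p" and in_Ap: "in_Ap p w"
begin

abbreviation Ap :: real where "Ap \<equiv> real_of_ereal (Ap_const p w)"

abbreviation \<sigma> :: "nat \<Rightarrow> real" where "\<sigma> \<equiv> dual_weight p w"

lemma weight_pos: "k \<ge> 1 \<Longrightarrow> w k > 0"
  using in_Ap unfolding in_Ap_def is_weight_def by auto

lemma weight_nonneg: "k \<ge> 1 \<Longrightarrow> w k \<ge> 0"
  using weight_pos less_imp_le by blast

lemma dual_weight_pos: "k \<ge> 1 \<Longrightarrow> \<sigma> k > 0"
  using weight_pos[of k] by (simp add: dual_weight_def)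

lemma sum_weight_block_pos: "0 < sum w (dyadic_block i)"
  using dyadic_block_nonempty weight_pos dyadic_block_ge_1 by (intro sum_pos) auto

lemma sum_dual_weight_block_pos: "0 < sum \<sigma> (dyadic_block i)"
  using dyadic_block_nonempty dual_weight_pos dyadic_block_ge_1 by (intro sum_pos) auto

lemma Ap_const_eq: "Ap_const p w = ereal Ap" and Ap_ge_1: "Ap \<ge> 1"
proof -
  have "Ap_const p w \<ge> 1" "Ap_const p w < \<infinity>"
    using in_Ap Ap_const_ge_1 p_gt_1 unfolding in_Ap_def by auto
  then obtain a where "Ap_const p w = ereal a" "1 \<le> a"
    by (cases "Ap_const p w") auto
  then show "Ap_const p w = ereal Ap" "Ap \<ge> 1" by simp_all
qed

lemma Ap_average_le:
  assumes "n \<ge> 1"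
  shows "(sum w {1..n} / real n) * (sum \<sigma> {1..n} / real n) powr (p - 1) \<le> Ap"
  using Ap_average_le_Ap_const[OF assms, of w p] by (metis Ap_const_eq ereal_less_eq(3))

abbreviation doubling_const :: real where "doubling_const \<equiv> Ap * 2 powr p"

lemma doubling_const_ge_1: "doubling_const \<ge> 1"
  using Ap_ge_1 p_gt_1 mult_mono[of 1 Ap 1 "2 powr p"] by (simp add: ge_one_powr_ge_zero)

lemma Ap_segment_bound:
  "sum w (dyadic_segment i) * sum \<sigma> (dyadic_segment i) powr (p - 1) \<le> doubling_const * real (2^i) powr p"
proof -
  define n :: nat where "n = 2^Suc i - 1"
  have "n \<ge> 1" unfolding n_def using one_less_two_power_Suc[of i] by linarith
  have "0 \<le> sum \<sigma> {1..n}" by (simp add: sum_nonneg dual_weight_def)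
  have "sum w {1..n} * sum \<sigma> {1..n} powr (p - 1)
      = (sum w {1..n} / real n) * (sum \<sigma> {1..n} / real n) powr (p - 1) * real n powr p"
    using \<open>n \<ge> 1\<close> \<open>0 \<le> sum \<sigma> {1..n}\<close> by (simp add: powr_divide powr_diff)
  also have "\<dots> \<le> Ap * real n powr p"
    using Ap_average_le[OF \<open>n \<ge> 1\<close>] by (intro mult_right_mono) auto
  also have "\<dots> \<le> Ap * (2 * real (2^i)) powr p"
  proof -
    have "n \<le> 2 * 2^i" unfolding n_def by simp
    then have "real n \<le> 2 * real (2^i)"
      by (metis of_nat_le_iff of_nat_mult of_nat_numeral)
    then show ?thesis using Ap_ge_1 p_gt_1 by (intro mult_left_mono powr_mono2) auto
  qed
  also have "\<dots> = doubling_const * real (2^i) powr p"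
    by (simp add: powr_mult)
  finally show ?thesis unfolding dyadic_segment_eq n_def .
qed

lemma block_lower_bound:
  "real (2^i) powr p \<le> sum w (dyadic_block i) * sum \<sigma> (dyadic_block i) powr (p - 1)"
proof -
  have "real (card (dyadic_block i)) powr p
      \<le> sum w (dyadic_block i) * sum \<sigma> (dyadic_block i) powr (p - 1)"
    using p_gt_1 by (intro card_powr_le_weight_dual) (auto intro: weight_pos dyadic_block_ge_1)
  then show ?thesis unfolding card_dyadic_block .
qed

(* A_p on a dyadic segment and Hoelder on its top block: the top block carries a fixed proportion
   of both w and sigma of the whole segment. *)
lemma segment_le_block:
  "sum w (dyadic_segment i) * sum \<sigma> (dyadic_segment i) powr (p - 1)
     \<le> doubling_const * (sum w (dyadic_block i) * sum \<sigma> (dyadic_block i) powr (p - 1))"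
proof -
  have "sum w (dyadic_segment i) * sum \<sigma> (dyadic_segment i) powr (p - 1) \<le> doubling_const * real (2^i) powr p"
    by (rule Ap_segment_bound)
  also have "\<dots> \<le> doubling_const * (sum w (dyadic_block i) * sum \<sigma> (dyadic_block i) powr (p - 1))"
    using doubling_const_ge_1 by (intro mult_left_mono[OF block_lower_bound]) auto
  finally show ?thesis .
qed

lemma sum_dual_weight_block_le: "sum \<sigma> (dyadic_block i) \<le> sum \<sigma> (dyadic_segment i)"
  and sum_weight_block_le: "sum w (dyadic_block i) \<le> sum w (dyadic_segment i)"
  using dyadic_block_subset_segment[of i]
  by (auto intro!: sum_mono2 weight_nonneg simp: dual_weight_def dyadic_segment_def)

lemma segment_weight_growth:
  "sum w (dyadic_segment i) \<le> (1 - 1 / doubling_const) * sum w (dyadic_segment (Suc i))"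
proof -
  let ?Ws = "sum w (dyadic_segment (Suc i))" and ?Wb = "sum w (dyadic_block (Suc i))"
  let ?Ss = "sum \<sigma> (dyadic_segment (Suc i))" and ?Sb = "sum \<sigma> (dyadic_block (Suc i))"
  have "?Ws * ?Ss powr (p - 1) \<le> doubling_const * (?Wb * ?Sb powr (p - 1))"
    by (rule segment_le_block)
  also have "\<dots> \<le> doubling_const * (?Wb * ?Ss powr (p - 1))"
    using sum_dual_weight_block_le[of "Suc i"] sum_dual_weight_block_pos[of "Suc i"]
      sum_weight_block_pos[of "Suc i"] doubling_const_ge_1 p_gt_1
    by (intro mult_left_mono powr_mono2) auto
  finally have "?Ws * ?Ss powr (p - 1) \<le> (doubling_const * ?Wb) * ?Ss powr (p - 1)"
    by (simp only: mult.assoc)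
  moreover have "0 < ?Ss powr (p - 1)"
    using sum_dual_weight_block_pos[of "Suc i"] sum_dual_weight_block_le[of "Suc i"] by simp
  ultimately have "?Ws \<le> doubling_const * ?Wb"
    by (rule mult_right_le_imp_le)
  then have "?Ws / doubling_const \<le> ?Wb"
    using doubling_const_ge_1 by (simp add: pos_divide_le_eq mult.commute)
  moreover have "(1 - 1 / doubling_const) * ?Ws = ?Ws - ?Ws / doubling_const"
    by (simp add: left_diff_distrib)
  ultimately show ?thesis
    using sum_dyadic_segment_Suc[of w i] by linarith
qed

lemma segment_dual_weight_growth:
  "sum \<sigma> (dyadic_segment i) \<le> (1 - 1 / doubling_const powr (1 / (p - 1))) * sum \<sigma> (dyadic_segment (Suc i))"
proof -
  let ?Ws = "sum w (dyadic_segment (Suc i))" and ?Wb = "sum w (dyadic_block (Suc i))"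
  let ?Ss = "sum \<sigma> (dyadic_segment (Suc i))" and ?Sb = "sum \<sigma> (dyadic_block (Suc i))"
  let ?c = "doubling_const powr (1 / (p - 1))"
  have "?Ws * ?Ss powr (p - 1) \<le> doubling_const * (?Wb * ?Sb powr (p - 1))"
    by (rule segment_le_block)
  also have "\<dots> \<le> doubling_const * (?Ws * ?Sb powr (p - 1))"
    using sum_weight_block_le[of "Suc i"] doubling_const_ge_1
    by (intro mult_left_mono mult_right_mono) auto
  finally have "?Ss powr (p - 1) \<le> doubling_const * ?Sb powr (p - 1)"
    using sum_weight_block_pos[of "Suc i"] sum_weight_block_le[of "Suc i"] by (simp add: mult.left_commute)
  then have "(?Ss powr (p - 1)) powr (1 / (p - 1)) \<le> (doubling_const * ?Sb powr (p - 1)) powr (1 / (p - 1))"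
    using p_gt_1 by (intro powr_mono2) auto
  then have "?Ss \<le> ?c * ?Sb"
    using p_gt_1 doubling_const_ge_1 sum_dual_weight_block_pos[of "Suc i"] sum_dual_weight_block_le[of "Suc i"]
    by (simp add: powr_powr powr_mult)
  moreover have "0 < ?c" using Ap_ge_1 by simp
  ultimately have "?Ss / ?c \<le> ?Sb"
    by (simp add: pos_divide_le_eq mult.commute)
  moreover have "(1 - 1 / ?c) * ?Ss = ?Ss - ?Ss / ?c"
    by (simp add: left_diff_distrib)
  ultimately show ?thesis
    using sum_dyadic_segment_Suc[of \<sigma> i] by linarith
qed

definition decay :: real where
  "decay = max (1 - 1 / doubling_const) ((1 - 1 / doubling_const powr (1 / (p - 1))) powr (p - 1))"

lemma decay_nonneg: "0 \<le> decay"
  using doubling_const_ge_1 by (simp add: decay_def le_max_iff_disj)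

lemma decay_less_1: "decay < 1"
proof -
  have "1 \<le> doubling_const powr (1 / (p - 1))"
    using doubling_const_ge_1 p_gt_1 by (intro ge_one_powr_ge_zero) auto
  then have "(1 - 1 / doubling_const powr (1 / (p - 1))) powr (p - 1) < 1 powr (p - 1)"
    using p_gt_1 by (intro powr_less_mono2) (auto simp: divide_le_eq_1)
  then show ?thesis using doubling_const_ge_1 by (simp add: decay_def)
qed

lemma segment_weight_step: "sum w (dyadic_segment i) \<le> decay * sum w (dyadic_segment (Suc i))"
  using segment_weight_growth
  by (rule order_trans) (auto intro!: mult_right_mono sum_nonneg weight_nonneg simp: decay_def dyadic_segment_def)

lemma segment_dual_weight_step:
  "sum \<sigma> (dyadic_segment i) powr (p - 1) \<le> decay * sum \<sigma> (dyadic_segment (Suc i)) powr (p - 1)"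
proof -
  let ?d = "1 - 1 / doubling_const powr (1 / (p - 1))"
  have "0 \<le> ?d"
    using doubling_const_ge_1 p_gt_1 ge_one_powr_ge_zero[of doubling_const "1 / (p - 1)"]
    by (simp add: divide_le_eq_1)
  have "0 \<le> sum \<sigma> (dyadic_segment i)" by (simp add: sum_nonneg dual_weight_def)
  then have "sum \<sigma> (dyadic_segment i) powr (p - 1) \<le> (?d * sum \<sigma> (dyadic_segment (Suc i))) powr (p - 1)"
    using segment_dual_weight_growth p_gt_1 by (intro powr_mono2) auto
  also have "\<dots> = ?d powr (p - 1) * sum \<sigma> (dyadic_segment (Suc i)) powr (p - 1)"
    using \<open>0 \<le> ?d\<close> by (simp add: powr_mult sum_nonneg dual_weight_def)
  also have "\<dots> \<le> decay * sum \<sigma> (dyadic_segment (Suc i)) powr (p - 1)"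
    unfolding decay_def by (intro mult_right_mono max.cobounded2 powr_ge_zero)
  finally show ?thesis .
qed

lemma sum_weight_segment_nonneg: "0 \<le> sum w (dyadic_segment i)"
  by (auto intro!: sum_nonneg weight_nonneg simp: dyadic_segment_def)

lemma segment_product_decay:
  "sum w (dyadic_segment m) * sum \<sigma> (dyadic_segment i) powr (p - 1)
     \<le> doubling_const * real (2 ^ max m i) powr p * decay ^ (max m i - min m i)"
proof (cases "i \<le> m")
  case True
  have "sum \<sigma> (dyadic_segment i) powr (p - 1) \<le> decay ^ (m - i) * sum \<sigma> (dyadic_segment m) powr (p - 1)"
    using segment_dual_weight_step decay_nonneg True by (rule le_power_mult_of_step)
  then have "sum w (dyadic_segment m) * sum \<sigma> (dyadic_segment i) powr (p - 1)
      \<le> decay ^ (m - i) * (sum w (dyadic_segment m) * sum \<sigma> (dyadic_segment m) powr (p - 1))"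
    using sum_weight_segment_nonneg by (simp add: mult_left_mono mult.left_commute)
  also have "\<dots> \<le> decay ^ (m - i) * (doubling_const * real (2 ^ m) powr p)"
    using decay_nonneg by (intro mult_left_mono Ap_segment_bound) auto
  moreover have "max m i = m" "min m i = i" using True by auto
  ultimately show ?thesis by (simp add: mult_ac)
next
  case False
  have "sum w (dyadic_segment m) \<le> decay ^ (i - m) * sum w (dyadic_segment i)"
    using segment_weight_step decay_nonneg False by (intro le_power_mult_of_step) auto
  then have "sum w (dyadic_segment m) * sum \<sigma> (dyadic_segment i) powr (p - 1)
      \<le> decay ^ (i - m) * (sum w (dyadic_segment i) * sum \<sigma> (dyadic_segment i) powr (p - 1))"
    by (metis mult.assoc mult_right_mono powr_ge_zero)
  also have "\<dots> \<le> decay ^ (i - m) * (doubling_const * real (2 ^ i) powr p)"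
    using decay_nonneg by (intro mult_left_mono Ap_segment_bound) auto
  moreover have "max m i = i" "min m i = m" using False by auto
  ultimately show ?thesis by (simp add: mult_ac)
qed

definition kernel_decay :: real where
  "kernel_decay = decay powr (1 / p)"

lemma kernel_decay_nonneg: "0 \<le> kernel_decay"
  and kernel_decay_less_1: "kernel_decay < 1"
proof -
  show "0 \<le> kernel_decay" by (simp add: kernel_decay_def)
  have "decay powr (1 / p) < 1 powr (1 / p)"
    using decay_less_1 decay_nonneg p_gt_1 by (intro powr_less_mono2) auto
  then show "kernel_decay < 1" by (simp add: kernel_decay_def)
qed

(* Schur-test kernel of the dyadic Hardy operator: geometric decay away from the diagonal. *)
lemma block_kernel_le:
  "sum w (dyadic_block m) powr (1/p) * sum \<sigma> (dyadic_block i) powr (1 - 1/p) / real (2 ^ max m i)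
     \<le> doubling_const powr (1/p) * kernel_decay ^ (max m i - min m i)"
proof -
  define K where
    "K = sum w (dyadic_block m) powr (1/p) * sum \<sigma> (dyadic_block i) powr (1 - 1/p) / real (2 ^ max m i)"
  have "0 \<le> K" unfolding K_def by simp
  have "K powr p = sum w (dyadic_block m) * sum \<sigma> (dyadic_block i) powr (p - 1) / real (2 ^ max m i) powr p"
    unfolding K_def using p_gt_1 sum_weight_block_pos[of m] sum_dual_weight_block_pos[of i]
    by (simp add: powr_divide powr_conjugate_mult less_imp_le)
  also have "\<dots> \<le> sum w (dyadic_segment m) * sum \<sigma> (dyadic_segment i) powr (p - 1) / real (2 ^ max m i) powr p"
    using sum_weight_block_le[of m] sum_dual_weight_block_le[of i] sum_dual_weight_block_pos[of i]
      sum_weight_block_pos[of m] p_gt_1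
    by (intro divide_right_mono mult_mono powr_mono2) auto
  also have "\<dots> \<le> doubling_const * decay ^ (max m i - min m i)"
    using segment_product_decay[of m i] by (simp add: divide_le_eq mult_ac)
  finally have "K \<le> (doubling_const * decay ^ (max m i - min m i)) powr (1/p)"
    using \<open>0 \<le> K\<close> p_gt_1 by (intro le_powr_inverse_of_powr_le) auto
  also have "\<dots> = doubling_const powr (1/p) * kernel_decay ^ (max m i - min m i)"
    using doubling_const_ge_1 decay_nonneg by (simp add: kernel_decay_def powr_mult power_powr)
  finally show ?thesis unfolding K_def .
qed

lemma block_sum_le_holder:
  "(\<Sum>j\<in>dyadic_block i. \<bar>f j\<bar>)
     \<le> (\<Sum>j\<in>dyadic_block i. w j * \<bar>f j\<bar> powr p) powr (1/p) * sum \<sigma> (dyadic_block i) powr (1 - 1/p)"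
proof -
  have "\<bar>f j\<bar> = (w j * \<bar>f j\<bar> powr p) powr (1/p) * \<sigma> j powr (1 - 1/p)" if "j \<in> dyadic_block i" for j
  proof -
    have "w j > 0" using weight_pos dyadic_block_ge_1 that by auto
    then have "(w j * \<bar>f j\<bar> powr p) powr (1/p) = w j powr (1/p) * \<bar>f j\<bar>"
      using p_gt_1 by (simp add: powr_mult powr_powr)
    moreover have "w j powr (1/p) * \<sigma> j powr (1 - 1/p) = 1"
      using \<open>w j > 0\<close> p_gt_1 by (simp add: dual_weight_powr_conj flip: powr_add)
    ultimately show ?thesis by (metis mult.assoc mult.commute mult.right_neutral)
  qed
  then have "(\<Sum>j\<in>dyadic_block i. \<bar>f j\<bar>)
      = (\<Sum>j\<in>dyadic_block i. (w j * \<bar>f j\<bar> powr p) powr (1/p) * \<sigma> j powr (1 - 1/p))"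
    by (rule sum.cong[OF refl])
  also have "\<dots> \<le> (\<Sum>j\<in>dyadic_block i. w j * \<bar>f j\<bar> powr p) powr (1/p) * sum \<sigma> (dyadic_block i) powr (1 - 1/p)"
    using p_gt_1 weight_nonneg[OF dyadic_block_ge_1]
    by (intro holder_sum_powr) (auto simp: dual_weight_def)
  finally show ?thesis .
qed

lemma block_weight_mult_dyadic_sum_le:
  fixes f :: "nat \<Rightarrow> real" and L m :: nat
  defines "E \<equiv> \<lambda>i. \<Sum>j\<in>dyadic_block i. w j * \<bar>f j\<bar> powr p"
  shows "sum w (dyadic_block m) powr (1/p) * (\<Sum>i<L. (\<Sum>j\<in>dyadic_block i. \<bar>f j\<bar>) / real (2 ^ max m i))
     \<le> (\<Sum>i<L. kernel_decay ^ (max m i - min m i) * (doubling_const * E i) powr (1/p))"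
proof -
  have "0 \<le> E i" for i unfolding E_def
    using weight_nonneg[OF dyadic_block_ge_1] by (intro sum_nonneg) auto
  have "sum w (dyadic_block m) powr (1/p) * (\<Sum>i<L. (\<Sum>j\<in>dyadic_block i. \<bar>f j\<bar>) / real (2 ^ max m i))
      \<le> (\<Sum>i<L. E i powr (1/p)
           * (sum w (dyadic_block m) powr (1/p) * sum \<sigma> (dyadic_block i) powr (1 - 1/p) / real (2 ^ max m i)))"
    unfolding sum_distrib_left E_def
  proof (intro sum_mono)
    fix i
    have "sum w (dyadic_block m) powr (1/p) * (\<Sum>j\<in>dyadic_block i. \<bar>f j\<bar>) / real (2 ^ max m i)
        \<le> sum w (dyadic_block m) powr (1/p) * ((\<Sum>j\<in>dyadic_block i. w j * \<bar>f j\<bar> powr p) powr (1/p)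
            * sum \<sigma> (dyadic_block i) powr (1 - 1/p)) / real (2 ^ max m i)"
      by (intro divide_right_mono mult_left_mono block_sum_le_holder) auto
    then show "sum w (dyadic_block m) powr (1/p) * ((\<Sum>j\<in>dyadic_block i. \<bar>f j\<bar>) / real (2 ^ max m i))
        \<le> (\<Sum>j\<in>dyadic_block i. w j * \<bar>f j\<bar> powr p) powr (1/p)
           * (sum w (dyadic_block m) powr (1/p) * sum \<sigma> (dyadic_block i) powr (1 - 1/p) / real (2 ^ max m i))"
      by (simp add: mult_ac)
  qed
  also have "\<dots> \<le> (\<Sum>i<L. E i powr (1/p) * (doubling_const powr (1/p) * kernel_decay ^ (max m i - min m i)))"
    by (intro sum_mono mult_left_mono block_kernel_le) auto
  also have "\<dots> = (\<Sum>i<L. kernel_decay ^ (max m i - min m i) * (doubling_const * E i) powr (1/p))"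
    using doubling_const_ge_1 \<open>\<And>i. 0 \<le> E i\<close> by (simp add: powr_mult mult_ac)
  finally show ?thesis .
qed

lemma hardy_block_bound:
  fixes f :: "nat \<Rightarrow> real" and L m :: nat
  defines "E \<equiv> \<lambda>i. \<Sum>j\<in>dyadic_block i. w j * \<bar>f j\<bar> powr p"
  shows "(\<Sum>k\<in>dyadic_block m. w k * hardy_sum f (2^L) k powr p)
     \<le> (2 / (1 - kernel_decay)) powr (p - 1)
        * (\<Sum>i<L. kernel_decay ^ (max m i - min m i) * (doubling_const * E i))"
proof -
  let ?\<rho> = "\<lambda>i. kernel_decay ^ (max m i - min m i)"
  define Y where "Y = (\<Sum>i<L. (\<Sum>j\<in>dyadic_block i. \<bar>f j\<bar>) / real (2 ^ max m i))"
  have "0 \<le> Y" unfolding Y_def by (intro sum_nonneg divide_nonneg_nonneg sum_nonneg) auto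
  have "0 \<le> E i" for i unfolding E_def
    using weight_nonneg[OF dyadic_block_ge_1] by (intro sum_nonneg) auto
  have "(\<Sum>k\<in>dyadic_block m. w k * hardy_sum f (2^L) k powr p) \<le> (\<Sum>k\<in>dyadic_block m. w k * Y powr p)"
    using weight_nonneg[OF dyadic_block_ge_1] hardy_sum_le_dyadic p_gt_1 hardy_sum_nonneg
    unfolding Y_def by (intro sum_mono mult_left_mono powr_mono2) auto
  also have "\<dots> = (sum w (dyadic_block m) powr (1/p) * Y) powr p"
    using sum_weight_block_pos[of m] \<open>0 \<le> Y\<close> p_gt_1
    by (simp add: powr_mult powr_powr sum_distrib_right)
  also have "\<dots> \<le> (\<Sum>i<L. ?\<rho> i * (doubling_const * E i) powr (1/p)) powr p"
    using block_weight_mult_dyadic_sum_le[of m f L] p_gt_1 sum_weight_block_pos \<open>0 \<le> Y\<close>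
    unfolding Y_def E_def by (intro powr_mono2) auto
  also have "\<dots> \<le> (\<Sum>i<L. ?\<rho> i) powr (p - 1) * (\<Sum>i<L. ?\<rho> i * ((doubling_const * E i) powr (1/p)) powr p)"
    using p_gt_1 kernel_decay_nonneg by (intro weighted_sum_powr_le) auto
  also have "\<dots> \<le> (2 / (1 - kernel_decay)) powr (p - 1) * (\<Sum>i<L. ?\<rho> i * (doubling_const * E i))"
    using sum_power_dist_le[of kernel_decay "{..<L}" m] kernel_decay_nonneg kernel_decay_less_1 p_gt_1
      doubling_const_ge_1 \<open>\<And>i. 0 \<le> E i\<close>
    by (intro mult_mono powr_mono2) (auto simp: powr_powr intro!: sum_nonneg)
  finally show ?thesis .
qed

definition hardy_const :: real where
  "hardy_const = (2 / (1 - kernel_decay)) powr p * doubling_const"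

lemma hardy_const_pos: "0 < hardy_const"
  using kernel_decay_less_1 doubling_const_ge_1 by (simp add: hardy_const_def)

lemma hardy_dyadic_bound:
  "(\<Sum>k\<in>{1..<2^M}. w k * hardy_sum f (2^L) k powr p)
     \<le> hardy_const * (\<Sum>j\<in>{1..<2^L}. w j * \<bar>f j\<bar> powr p)"
proof -
  define D where "D = 2 / (1 - kernel_decay)"
  define E where "E i = (\<Sum>j\<in>dyadic_block i. w j * \<bar>f j\<bar> powr p)" for i
  let ?\<rho> = "\<lambda>m i. kernel_decay ^ (max m i - min m i)"
  have "0 < D" using kernel_decay_less_1 by (simp add: D_def)
  have "0 \<le> E i" for i unfolding E_def
    using weight_nonneg[OF dyadic_block_ge_1] by (intro sum_nonneg) auto
  have "(\<Sum>k\<in>{1..<2^M}. w k * hardy_sum f (2^L) k powr p)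
      = (\<Sum>m<M. \<Sum>k\<in>dyadic_block m. w k * hardy_sum f (2^L) k powr p)"
    by (rule sum_dyadic_blocks)
  also have "\<dots> \<le> (\<Sum>m<M. D powr (p - 1) * (\<Sum>i<L. ?\<rho> m i * (doubling_const * E i)))"
    unfolding D_def E_def by (intro sum_mono hardy_block_bound)
  also have "\<dots> = D powr (p - 1) * doubling_const * (\<Sum>m<M. \<Sum>i<L. ?\<rho> m i * E i)"
    by (simp add: sum_distrib_left mult_ac)
  also have "(\<Sum>m<M. \<Sum>i<L. ?\<rho> m i * E i) = (\<Sum>i<L. E i * (\<Sum>m<M. ?\<rho> i m))"
    by (subst sum.swap) (simp add: sum_distrib_left max.commute min.commute mult.commute)
  also have "D powr (p - 1) * doubling_const * \<dots> \<le> D powr (p - 1) * doubling_const * (\<Sum>i<L. E i * D)"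
    using sum_power_dist_le kernel_decay_nonneg kernel_decay_less_1 doubling_const_ge_1 \<open>\<And>i. 0 \<le> E i\<close>
    unfolding D_def by (intro mult_left_mono sum_mono) auto
  also have "\<dots> = (D powr (p - 1) * D) * doubling_const * (\<Sum>i<L. E i)"
    by (simp only: sum_distrib_left[symmetric] mult_ac)
  also have "\<dots> = hardy_const * (\<Sum>i<L. E i)"
    using \<open>0 < D\<close> by (simp add: hardy_const_def D_def powr_diff)
  also have "(\<Sum>i<L. E i) = (\<Sum>j\<in>{1..<2^L}. w j * \<bar>f j\<bar> powr p)"
    unfolding E_def by (rule sum_dyadic_blocks[symmetric])
  finally show ?thesis .
qed

lemma hardy_weighted_bound:
  "(\<Sum>k\<in>{1..<K}. w k * hardy_sum f L k powr p) \<le> hardy_const * (\<Sum>j\<in>{1..<L}. w j * \<bar>f j\<bar> powr p)"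
proof -
  define g where "g j = (if j < L then f j else 0)" for j
  have "L \<le> 2^L" "K \<le> 2^K" by (simp_all add: less_imp_le)
  have "hardy_sum f L k = hardy_sum g (2^L) k" for k
    unfolding hardy_sum_def using \<open>L \<le> 2^L\<close> by (intro sum.mono_neutral_cong_left) (auto simp: g_def)
  moreover have "(\<Sum>j\<in>{1..<L}. w j * \<bar>f j\<bar> powr p) = (\<Sum>j\<in>{1..<2^L}. w j * \<bar>g j\<bar> powr p)"
    using \<open>L \<le> 2^L\<close> by (intro sum.mono_neutral_cong_left) (auto simp: g_def)
  moreover have "(\<Sum>k\<in>{1..<K}. w k * hardy_sum g (2^L) k powr p)
      \<le> (\<Sum>k\<in>{1..<2^K}. w k * hardy_sum g (2^L) k powr p)"
    using \<open>K \<le> 2^K\<close> weight_nonneg by (intro sum_mono2) auto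
  ultimately show ?thesis using hardy_dyadic_bound[where M=K and f=g and L=L] by simp
qed

lemma hardy_sum_le_pointwise:
  assumes "lp_summable p w f" "1 \<le> k"
  shows "hardy_sum f L k \<le> (hardy_const * lp_sum p w f / w k) powr (1/p)"
proof (rule le_powr_inverse_of_powr_le)
  have "w k * hardy_sum f L k powr p \<le> (\<Sum>k'\<in>{1..<Suc k}. w k' * hardy_sum f L k' powr p)"
    using assms weight_nonneg by (intro member_le_sum) auto
  also have "\<dots> \<le> hardy_const * (\<Sum>j\<in>{1..<L}. w j * \<bar>f j\<bar> powr p)"
    by (rule hardy_weighted_bound)
  also have "\<dots> \<le> hardy_const * lp_sum p w f"
    using assms hardy_const_pos weight_nonneg by (intro mult_left_mono partial_sum_le_lp_sum) auto
  finally show "hardy_sum f L k powr p \<le> hardy_const * lp_sum p w f / w k"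
    using weight_pos[OF assms(2)] by (simp add: field_simps)
qed (use p_gt_1 hardy_sum_nonneg in auto)

lemma avg_bdd_above:
  assumes "lp_summable p w f"
  shows "bdd_above (avg f ` {k..})"
proof (rule bdd_aboveI2)
  fix n
  show "avg f n \<le> (hardy_const * lp_sum p w f / w 1) powr (1/p)"
  proof (cases "n = 0")
    case False
    then have "avg f n \<le> hardy_sum f (Suc n) 1" by (intro avg_le_hardy_sum) auto
    also have "\<dots> \<le> (hardy_const * lp_sum p w f / w 1) powr (1/p)"
      using assms by (rule hardy_sum_le_pointwise) simp
    finally show ?thesis .
  qed (simp add: avg_def)
qed

lemma maxop_le_SUP_hardy_sum:
  assumes "lp_summable p w f" "1 \<le> k"
  shows "maxop f k \<le> (SUP L. hardy_sum f L k)"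
  unfolding maxop_def
proof (rule cSUP_least)
  fix n assume "n \<in> {k..}"
  then have "avg f n \<le> hardy_sum f (Suc n) k" using assms by (intro avg_le_hardy_sum) auto
  also have "\<dots> \<le> (SUP L. hardy_sum f L k)"
    using hardy_sum_le_pointwise[OF assms] by (intro cSUP_upper bdd_aboveI2) auto
  finally show "avg f n \<le> (SUP L. hardy_sum f L k)" .
qed simp

lemma sum_SUP_hardy_sum_le:
  assumes "lp_summable p w f"
  shows "(\<Sum>k\<in>{1..<K}. w k * (SUP L. hardy_sum f L k) powr p) \<le> hardy_const * lp_sum p w f"
proof (rule LIMSEQ_le_const2)
  show "(\<lambda>L. \<Sum>k\<in>{1..<K}. w k * hardy_sum f L k powr p)
      \<longlonglongrightarrow> (\<Sum>k\<in>{1..<K}. w k * (SUP L. hardy_sum f L k) powr p)"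
  proof (intro tendsto_sum tendsto_mult_left tendsto_powr')
    fix k assume "k \<in> {1..<K}"
    then show "(\<lambda>L. hardy_sum f L k) \<longlonglongrightarrow> (SUP L. hardy_sum f L k)"
      using hardy_sum_le_pointwise[OF assms] incseq_hardy_sum
      by (intro LIMSEQ_incseq_SUP bdd_aboveI2) auto
  qed (use p_gt_1 hardy_sum_nonneg in auto)
  show "\<exists>N. \<forall>L\<ge>N. (\<Sum>k\<in>{1..<K}. w k * hardy_sum f L k powr p) \<le> hardy_const * lp_sum p w f"
    using hardy_weighted_bound partial_sum_le_lp_sum[OF assms] weight_nonneg hardy_const_pos
    by (meson mult_left_mono order.trans less_imp_le)
qed

lemma lp_sum_maxop_le:
  assumes "lp_summable p w f"
  shows "lp_summable p w (maxop f)" "lp_sum p w (maxop f) \<le> hardy_const * lp_sum p w f"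
proof -
  have "(\<Sum>j\<in>{1..<n}. w j * \<bar>maxop f j\<bar> powr p) \<le> hardy_const * lp_sum p w f" for n
  proof -
    have "(\<Sum>j\<in>{1..<n}. w j * \<bar>maxop f j\<bar> powr p) \<le> (\<Sum>j\<in>{1..<n}. w j * (SUP L. hardy_sum f L j) powr p)"
      using maxop_nonneg[OF avg_bdd_above[OF assms]] maxop_le_SUP_hardy_sum[OF assms] weight_nonneg p_gt_1
      by (intro sum_mono mult_left_mono powr_mono2) auto
    also have "\<dots> \<le> hardy_const * lp_sum p w f" by (rule sum_SUP_hardy_sum_le[OF assms])
    finally show ?thesis .
  qed
  note bound = this
  show "lp_summable p w (maxop f)" "lp_sum p w (maxop f) \<le> hardy_const * lp_sum p w f"
    using lp_sum_le_of_partial_sums_le[OF weight_nonneg bound] by auto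
qed

lemma wnorm_maxop_le_maxop_norm:
  assumes "wnorm p w f \<le> 1"
  shows "wnorm p w (maxop f) \<le> maxop_norm p w"
proof -
  have "lp_summable p w f" using assms by (auto simp: wnorm_eq split: if_splits)
  then have "\<forall>k\<ge>1. bdd_above (avg f ` {k..})" using avg_bdd_above by auto
  then have "wnorm p w (maxop f)
      = (if \<forall>k\<ge>1. bdd_above (avg f ` {k..}) then wnorm p w (maxop f) else \<infinity>)"
    by simp
  also have "\<dots> \<le> maxop_norm p w"
    unfolding maxop_norm_def using assms by (intro SUP_upper) auto
  finally show ?thesis .
qed

lemma maxop_norm_le: "maxop_norm p w \<le> ereal (hardy_const powr (1/p))"
  unfolding maxop_norm_def
proof (rule SUP_least)
  fix f assume "f \<in> {f. wnorm p w f \<le> 1}"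
  then have "wnorm p w f \<le> 1" by simp
  then have f: "lp_summable p w f" by (auto simp: wnorm_eq split: if_splits)
  with \<open>wnorm p w f \<le> 1\<close> have "lp_sum p w f powr (1/p) \<le> 1" by (simp add: wnorm_eq)
  then have "lp_sum p w f \<le> 1 powr p"
    using lp_sum_nonneg[OF weight_nonneg f] p_gt_1 by (intro le_powr_of_powr_inverse_le) auto
  then have "lp_sum p w f \<le> 1" by simp
  then have "hardy_const * lp_sum p w f \<le> hardy_const"
    using hardy_const_pos by (intro mult_left_le) auto
  then have "lp_sum p w (maxop f) \<le> hardy_const"
    using lp_sum_maxop_le(2)[OF f] by linarith
  then have "lp_sum p w (maxop f) powr (1/p) \<le> hardy_const powr (1/p)"
    using lp_sum_nonneg[OF weight_nonneg lp_sum_maxop_le(1)[OF f]] p_gt_1 by (intro powr_mono2) auto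
  then show "(if \<forall>k\<ge>1. bdd_above (avg f ` {k..}) then wnorm p w (maxop f) else \<infinity>)
      \<le> ereal (hardy_const powr (1/p))"
    using avg_bdd_above[OF f] lp_sum_maxop_le(1)[OF f] by (simp add: wnorm_eq)
qed

lemma maxop_norm_ge_1: "1 \<le> maxop_norm p w"
proof -
  have "0 < w 1" by (rule weight_pos) simp
  define f where "f k = (if k = 1 then w 1 powr (- 1 / p) else 0)" for k :: nat
  have "(w 1 powr (- 1 / p)) powr p = w 1 powr (- 1)"
    using p_gt_1 by (simp add: powr_powr)
  then have "w 1 * (w 1 powr (- 1 / p)) powr p = 1"
    using \<open>0 < w 1\<close> by (simp add: powr_minus)
  then have "(\<lambda>k. w (Suc k) * \<bar>f (Suc k)\<bar> powr p) = (\<lambda>k. if k = 0 then 1 else 0)"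
    by (auto simp: f_def)
  then have "(\<lambda>k. w (Suc k) * \<bar>f (Suc k)\<bar> powr p) sums 1"
    using sums_single[of 0 "\<lambda>_. 1::real"] by simp
  then have f: "lp_summable p w f" and "lp_sum p w f = 1"
    unfolding lp_summable_def lp_sum_def by (auto simp: sums_iff)
  then have "wnorm p w f \<le> 1" by (simp add: wnorm_eq)
  have "w 1 powr (- 1 / p) = avg f 1" by (simp add: avg_def f_def)
  also have "\<dots> \<le> maxop f 1" using avg_bdd_above[OF f] by (rule avg_le_maxop) simp
  finally have "w 1 powr (- 1 / p) \<le> maxop f 1" .
  then have "w 1 * (w 1 powr (- 1 / p)) powr p \<le> w 1 * \<bar>maxop f 1\<bar> powr p"
    using \<open>0 < w 1\<close> p_gt_1 by (intro mult_left_mono powr_mono2) auto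
  then have "1 \<le> w 1 * \<bar>maxop f 1\<bar> powr p"
    using \<open>w 1 * (w 1 powr (- 1 / p)) powr p = 1\<close> by simp
  also have "\<dots> = (\<Sum>j\<in>{1..<2}. w j * \<bar>maxop f j\<bar> powr p)"
    by (simp add: numeral_2_eq_2)
  also have "\<dots> \<le> lp_sum p w (maxop f)"
    using lp_sum_maxop_le(1)[OF f] weight_nonneg by (rule partial_sum_le_lp_sum)
  finally have "1 \<le> lp_sum p w (maxop f) powr (1/p)"
    using p_gt_1 by (intro ge_one_powr_ge_zero) auto
  then have "1 \<le> wnorm p w (maxop f)" using lp_sum_maxop_le(1)[OF f] by (simp add: wnorm_eq)
  also have "\<dots> \<le> maxop_norm p w" by (rule wnorm_maxop_le_maxop_norm) fact
  finally show ?thesis .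
qed

abbreviation Mnorm :: real where "Mnorm \<equiv> real_of_ereal (maxop_norm p w)"

lemma maxop_norm_eq: "maxop_norm p w = ereal Mnorm" and Mnorm_ge_1: "1 \<le> Mnorm"
proof -
  obtain a where "maxop_norm p w = ereal a" "1 \<le> a"
    using maxop_norm_le maxop_norm_ge_1 by (cases "maxop_norm p w") auto
  then show "maxop_norm p w = ereal Mnorm" "1 \<le> Mnorm" by simp_all
qed

lemma lp_sum_maxop_le_Mnorm:
  assumes f: "lp_summable p w f"
  shows "lp_sum p w (maxop f) \<le> Mnorm powr p * lp_sum p w f"
proof (cases "lp_sum p w f = 0")
  case True
  then show ?thesis using lp_sum_maxop_le(2)[OF f] by simp
next
  case False
  define t where "t = lp_sum p w f powr (1/p)"
  have "0 < t" using False lp_sum_nonneg[OF weight_nonneg f] by (simp add: t_def)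
  have "t powr p = lp_sum p w f"
    using lp_sum_nonneg[OF weight_nonneg f] p_gt_1 by (simp add: t_def powr_powr)
  define g where "g = (\<lambda>k. f k / t)"
  have g: "lp_summable p w g" and "lp_sum p w g = 1"
    using lp_sum_divide[OF \<open>0 < t\<close> f] \<open>t powr p = lp_sum p w f\<close> False by (auto simp: g_def)
  then have "wnorm p w (maxop g) \<le> ereal Mnorm"
    using wnorm_maxop_le_maxop_norm[of g] maxop_norm_eq by (simp add: wnorm_eq)
  then have "lp_sum p w (maxop g) \<le> Mnorm powr p"
    using lp_sum_maxop_le(1)[OF g] lp_sum_nonneg[OF weight_nonneg lp_sum_maxop_le(1)[OF g]] p_gt_1
    by (intro le_powr_of_powr_inverse_le) (auto simp: wnorm_eq)
  have "lp_sum p w (\<lambda>k. maxop f k / t) \<le> lp_sum p w (maxop g)"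
  proof (rule lp_sum_mono(2)[OF weight_nonneg _ lp_sum_maxop_le(1)[OF g]])
    fix k :: nat assume "1 \<le> k"
    have "maxop f k \<le> t * maxop g k"
      using \<open>0 < t\<close> avg_bdd_above[OF g] unfolding g_def by (rule maxop_le_mult_maxop_divide)
    then show "\<bar>maxop f k / t\<bar> \<le> \<bar>maxop g k\<bar>"
      using \<open>0 < t\<close> maxop_nonneg[OF avg_bdd_above[OF f]] maxop_nonneg[OF avg_bdd_above[OF g]]
      by (simp add: pos_divide_le_eq mult.commute)
  qed (use p_gt_1 in auto)
  then have "lp_sum p w (maxop f) \<le> lp_sum p w (maxop g) * lp_sum p w f"
    using lp_sum_divide(2)[OF \<open>0 < t\<close> lp_sum_maxop_le(1)[OF f]] \<open>t powr p = lp_sum p w f\<close> False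
      lp_sum_nonneg[OF weight_nonneg f] by (simp add: divide_le_eq)
  also have "\<dots> \<le> Mnorm powr p * lp_sum p w f"
    using \<open>lp_sum p w (maxop g) \<le> Mnorm powr p\<close> lp_sum_nonneg[OF weight_nonneg f]
    by (rule mult_right_mono)
  finally show ?thesis .
qed

end

section \<open>The Rubio de Francia algorithm\<close>

locale rubio_de_francia = Ap_weight +
  fixes h :: "nat \<Rightarrow> real"
  assumes h_nonneg: "\<And>k. 0 \<le> h k"
    and h_summable: "lp_summable p w h"
    and h_lp_sum_le_1: "lp_sum p w h \<le> 1"
begin

definition maxop_iter :: "nat \<Rightarrow> nat \<Rightarrow> real" where
  "maxop_iter i = (maxop ^^ i) h"

lemma maxop_iter_0: "maxop_iter 0 = h"
  and maxop_iter_Suc: "maxop_iter (Suc i) = maxop (maxop_iter i)"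
  by (simp_all add: maxop_iter_def)

lemma maxop_iter_bounds:
  "lp_summable p w (maxop_iter i) \<and> lp_sum p w (maxop_iter i) \<le> (Mnorm powr p) ^ i \<and> (\<forall>k. 0 \<le> maxop_iter i k)"
proof (induction i)
  case 0
  then show ?case using h_summable h_lp_sum_le_1 h_nonneg by (simp add: maxop_iter_0)
next
  case (Suc i)
  then have summable: "lp_summable p w (maxop_iter i)" by blast
  have "lp_sum p w (maxop_iter (Suc i)) \<le> Mnorm powr p * lp_sum p w (maxop_iter i)"
    unfolding maxop_iter_Suc by (rule lp_sum_maxop_le_Mnorm[OF summable])
  also have "\<dots> \<le> Mnorm powr p * (Mnorm powr p) ^ i"
    using Suc by (intro mult_left_mono) auto
  finally show ?case
    using lp_sum_maxop_le(1)[OF summable] maxop_nonneg[OF avg_bdd_above[OF summable]]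
    by (simp add: maxop_iter_Suc)
qed

lemma maxop_iter_summable: "lp_summable p w (maxop_iter i)"
  and lp_sum_maxop_iter_le: "lp_sum p w (maxop_iter i) \<le> (Mnorm powr p) ^ i"
  and maxop_iter_nonneg: "0 \<le> maxop_iter i k"
  using maxop_iter_bounds by auto

lemma maxop_iter_le_pointwise:
  assumes "1 \<le> k"
  shows "maxop_iter i k / Mnorm ^ i \<le> (1 / w k) powr (1/p)"
proof (rule le_powr_inverse_of_powr_le)
  have "w k * \<bar>maxop_iter i k\<bar> powr p \<le> (\<Sum>j\<in>{1..<Suc k}. w j * \<bar>maxop_iter i j\<bar> powr p)"
    using assms weight_nonneg by (intro member_le_sum) auto
  also have "\<dots> \<le> lp_sum p w (maxop_iter i)"
    using maxop_iter_summable weight_nonneg by (rule partial_sum_le_lp_sum)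
  also have "\<dots> \<le> (Mnorm powr p) ^ i" by (rule lp_sum_maxop_iter_le)
  finally have "w k * maxop_iter i k powr p \<le> (Mnorm powr p) ^ i"
    using maxop_iter_nonneg by simp
  then show "(maxop_iter i k / Mnorm ^ i) powr p \<le> 1 / w k"
    using weight_pos[OF assms] Mnorm_ge_1 maxop_iter_nonneg
    by (simp add: powr_divide power_powr field_simps)
qed (use p_gt_1 maxop_iter_nonneg Mnorm_ge_1 in auto)

definition rdf_term :: "nat \<Rightarrow> nat \<Rightarrow> real" where
  "rdf_term i k = maxop_iter i k / (2 * Mnorm) ^ i"

definition rdf :: "nat \<Rightarrow> real" where
  "rdf k = (\<Sum>i. rdf_term i k)"

lemma rdf_term_nonneg: "0 \<le> rdf_term i k"
  using maxop_iter_nonneg Mnorm_ge_1 by (simp add: rdf_term_def)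

lemma summable_rdf_term:
  assumes "1 \<le> k"
  shows "summable (\<lambda>i. rdf_term i k)"
proof (rule summable_comparison_test[OF _ summable_mult2[OF summable_geometric[of "1/2::real"]]])
  show "\<exists>N. \<forall>i\<ge>N. norm (rdf_term i k) \<le> (1/2) ^ i * (1 / w k) powr (1/p)"
  proof (intro exI allI impI)
    fix i :: nat
    have "rdf_term i k = (1/2) ^ i * (maxop_iter i k / Mnorm ^ i)"
      by (simp add: rdf_term_def power_mult_distrib field_simps)
    also have "\<dots> \<le> (1/2) ^ i * (1 / w k) powr (1/p)"
      using maxop_iter_le_pointwise[OF assms] by (intro mult_left_mono) auto
    finally show "norm (rdf_term i k) \<le> (1/2) ^ i * (1 / w k) powr (1/p)"
      using rdf_term_nonneg by simp
  qed
qed simp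

lemma rdf_term_le_rdf: "1 \<le> k \<Longrightarrow> rdf_term i k \<le> rdf k"
  unfolding rdf_def using summable_rdf_term rdf_term_nonneg
  by (intro sum_le_suminf[of _ "{i}", simplified]) auto

lemma h_le_rdf: "1 \<le> k \<Longrightarrow> h k \<le> rdf k"
  using rdf_term_le_rdf[of k 0] by (simp add: rdf_term_def maxop_iter_0)

lemma rdf_nonneg: "1 \<le> k \<Longrightarrow> 0 \<le> rdf k"
  unfolding rdf_def using summable_rdf_term rdf_term_nonneg by (intro suminf_nonneg) auto

lemma rdf_pos:
  assumes "1 \<le> j" "0 < h j" "1 \<le> k"
  shows "0 < rdf k"
proof -
  define n where "n = max j k"
  have "0 < avg h n"
    unfolding avg_def n_def using assms h_nonneg
    by (intro divide_pos_pos) (auto intro!: sum_pos2[of _ j])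
  also have "\<dots> \<le> maxop h k"
    using avg_bdd_above[OF h_summable] by (rule avg_le_maxop) (simp add: n_def)
  finally have "0 < rdf_term 1 k"
    using Mnorm_ge_1 by (simp add: rdf_term_def maxop_iter_Suc maxop_iter_0)
  then show ?thesis using rdf_term_le_rdf[OF assms(3), of 1] by simp
qed

(* The A_1 condition for R: the averages of each term are dominated by the next term. *)
lemma avg_rdf_le:
  assumes "1 \<le> k" "k \<le> n"
  shows "avg rdf n \<le> 2 * Mnorm * rdf k"
proof -
  define G where "G i = (\<Sum>j=1..n. rdf_term i j) / real n" for i
  have summable: "summable (\<lambda>i. rdf_term i j)" if "j \<in> {1..n}" for j
    using that summable_rdf_term by auto
  have "avg rdf n = (\<Sum>j=1..n. rdf j) / real n"
    unfolding avg_def using rdf_nonneg by (intro arg_cong2[where f="(/)"] sum.cong) auto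
  also have "\<dots> = (\<Sum>i. G i)"
    unfolding rdf_def G_def using summable
    by (subst suminf_sum[symmetric]) (auto intro!: suminf_divide[symmetric] summable_sum)
  finally have avg_eq: "avg rdf n = (\<Sum>i. G i)" .
  have G_le: "G i \<le> 2 * Mnorm * rdf_term (Suc i) k" for i
  proof -
    have "G i = avg (maxop_iter i) n / (2 * Mnorm) ^ i"
      unfolding G_def avg_def rdf_term_def using maxop_iter_nonneg by (simp add: sum_divide_distrib[symmetric])
    also have "\<dots> \<le> maxop_iter (Suc i) k / (2 * Mnorm) ^ i"
      unfolding maxop_iter_Suc using Mnorm_ge_1 assms avg_bdd_above[OF maxop_iter_summable]
      by (intro divide_right_mono avg_le_maxop) auto
    also have "\<dots> = 2 * Mnorm * rdf_term (Suc i) k"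
      unfolding rdf_term_def using Mnorm_ge_1 by (simp add: field_simps)
    finally show ?thesis .
  qed
  have summable_shift: "summable (\<lambda>i. rdf_term (Suc i) k)"
    using summable_rdf_term[OF assms(1)] by (subst summable_Suc_iff)
  have "(\<Sum>i. G i) \<le> (\<Sum>i. 2 * Mnorm * rdf_term (Suc i) k)"
    using G_le summable_shift summable unfolding G_def
    by (intro suminf_le summable_mult summable_divide summable_sum) auto
  also have "\<dots> = 2 * Mnorm * (\<Sum>i. rdf_term (Suc i) k)"
    using summable_shift by (rule suminf_mult)
  also have "(\<Sum>i. rdf_term (Suc i) k) = rdf k - rdf_term 0 k"
    unfolding rdf_def using summable_rdf_term[OF assms(1)] by (rule suminf_split_head)
  also have "2 * Mnorm * (rdf k - rdf_term 0 k) \<le> 2 * Mnorm * rdf k"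
    using rdf_term_nonneg Mnorm_ge_1 by (intro mult_left_mono) auto
  finally show ?thesis using avg_eq by simp
qed

lemma partial_rdf_lp_bound:
  "(\<Sum>k\<in>{1..<K}. w k * (\<Sum>i<N. rdf_term i k) powr p) \<le> 2 powr p"
proof -
  let ?a = "\<lambda>i. (1/2::real) ^ i / (Mnorm powr p) ^ i"
  have geometric: "(\<Sum>i<N. (1/2::real) ^ i) \<le> 2"
    using sum_power_le_geometric[of "1/2" "{..<N}"] by simp
  have pointwise: "(\<Sum>i<N. rdf_term i k) powr p \<le> 2 powr (p - 1) * (\<Sum>i<N. ?a i * maxop_iter i k powr p)"
    for k
  proof -
    have "(\<Sum>i<N. rdf_term i k) = (\<Sum>i<N. (1/2) ^ i * (maxop_iter i k / Mnorm ^ i))"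
      unfolding rdf_term_def by (intro sum.cong) (auto simp: power_mult_distrib field_simps)
    also have "\<dots> powr p
        \<le> (\<Sum>i<N. (1/2::real) ^ i) powr (p - 1) * (\<Sum>i<N. (1/2) ^ i * (maxop_iter i k / Mnorm ^ i) powr p)"
      using p_gt_1 maxop_iter_nonneg Mnorm_ge_1 by (intro weighted_sum_powr_le) auto
    also have "\<dots> \<le> 2 powr (p - 1) * (\<Sum>i<N. (1/2) ^ i * (maxop_iter i k / Mnorm ^ i) powr p)"
      using geometric p_gt_1 maxop_iter_nonneg Mnorm_ge_1
      by (intro mult_right_mono powr_mono2 sum_nonneg) auto
    also have "(\<Sum>i<N. (1/2::real) ^ i * (maxop_iter i k / Mnorm ^ i) powr p)
        = (\<Sum>i<N. ?a i * maxop_iter i k powr p)"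
      using maxop_iter_nonneg Mnorm_ge_1 by (intro sum.cong) (auto simp: powr_divide power_powr)
    finally show ?thesis .
  qed
  have "(\<Sum>k\<in>{1..<K}. w k * (\<Sum>i<N. rdf_term i k) powr p)
      \<le> (\<Sum>k\<in>{1..<K}. w k * (2 powr (p - 1) * (\<Sum>i<N. ?a i * maxop_iter i k powr p)))"
    using weight_nonneg pointwise by (intro sum_mono mult_left_mono) auto
  also have "\<dots> = 2 powr (p - 1) * (\<Sum>k\<in>{1..<K}. \<Sum>i<N. ?a i * (w k * \<bar>maxop_iter i k\<bar> powr p))"
    using maxop_iter_nonneg by (simp add: sum_distrib_left mult_ac)
  also have "\<dots> = 2 powr (p - 1) * (\<Sum>i<N. \<Sum>k\<in>{1..<K}. ?a i * (w k * \<bar>maxop_iter i k\<bar> powr p))"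
    by (subst sum.swap) (rule refl)
  also have "\<dots> = 2 powr (p - 1) * (\<Sum>i<N. ?a i * (\<Sum>k\<in>{1..<K}. w k * \<bar>maxop_iter i k\<bar> powr p))"
    by (simp add: sum_distrib_left)
  also have "\<dots> \<le> 2 powr (p - 1) * (\<Sum>i<N. ?a i * (Mnorm powr p) ^ i)"
    using order_trans[OF partial_sum_le_lp_sum[OF maxop_iter_summable weight_nonneg] lp_sum_maxop_iter_le]
    by (intro mult_left_mono sum_mono) auto
  also have "\<dots> = 2 powr (p - 1) * (\<Sum>i<N. (1/2::real) ^ i)"
    using Mnorm_ge_1 by simp
  also have "\<dots> \<le> 2 powr (p - 1) * 2"
    using geometric by (intro mult_left_mono) auto
  also have "\<dots> = 2 powr p" by (simp add: powr_diff)
  finally show ?thesis .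
qed

lemma rdf_lp_bound: "(\<Sum>k\<in>{1..<K}. w k * rdf k powr p) \<le> 2 powr p"
proof (rule LIMSEQ_le_const2)
  show "(\<lambda>N. \<Sum>k\<in>{1..<K}. w k * (\<Sum>i<N. rdf_term i k) powr p) \<longlonglongrightarrow> (\<Sum>k\<in>{1..<K}. w k * rdf k powr p)"
  proof (intro tendsto_sum tendsto_mult_left tendsto_powr')
    fix k assume "k \<in> {1..<K}"
    then show "(\<lambda>N. \<Sum>i<N. rdf_term i k) \<longlonglongrightarrow> rdf k"
      unfolding rdf_def using summable_rdf_term by (intro summable_LIMSEQ) auto
  qed (use p_gt_1 rdf_term_nonneg in \<open>auto intro!: always_eventually sum_nonneg\<close>)
qed (use partial_rdf_lp_bound in auto)

end

section \<open>Extrapolation\<close>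

locale extrapolation = rubio_de_francia +
  fixes p0 :: real
  assumes p_less_p0: "p < p0"
    and h_nonzero: "\<exists>j\<ge>1. 0 < h j"
begin

lemma rdf_positive: "1 \<le> k \<Longrightarrow> 0 < rdf k"
  using h_nonzero rdf_pos by blast

definition reweighted :: "nat \<Rightarrow> real" where
  "reweighted k = w k * rdf k powr (- (p0 - p))"

lemma reweighted_pos: "1 \<le> k \<Longrightarrow> 0 < reweighted k"
  using weight_pos[of k] rdf_positive[of k] by (simp add: reweighted_def)

lemma reweighted_nonneg: "1 \<le> k \<Longrightarrow> 0 \<le> reweighted k"
  using reweighted_pos less_imp_le by blast

lemma avg_rdf_eq: "avg rdf n = sum rdf {1..n} / real n"
  unfolding avg_def using rdf_nonneg by (intro arg_cong2[where f="(/)"] sum.cong) auto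

lemma avg_rdf_pos: "1 \<le> n \<Longrightarrow> 0 < avg rdf n"
  unfolding avg_rdf_eq using rdf_positive[of 1] rdf_nonneg
  by (intro divide_pos_pos sum_pos2[of _ 1]) auto

lemma sum_reweighted_le:
  assumes "1 \<le> n"
  shows "sum reweighted {1..n} \<le> (avg rdf n / (2 * Mnorm)) powr (- (p0 - p)) * sum w {1..n}"
proof -
  have "0 < avg rdf n" using avg_rdf_pos[OF assms] .
  have "rdf k powr (- (p0 - p)) \<le> (avg rdf n / (2 * Mnorm)) powr (- (p0 - p))" if "k \<in> {1..n}" for k
  proof (rule powr_mono2')
    show "avg rdf n / (2 * Mnorm) \<le> rdf k"
      using avg_rdf_le[of k n] that Mnorm_ge_1 by (simp add: divide_le_eq mult.commute)
  qed (use p_less_p0 \<open>0 < avg rdf n\<close> Mnorm_ge_1 in auto)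
  then have "sum reweighted {1..n} \<le> (\<Sum>k=1..n. w k * (avg rdf n / (2 * Mnorm)) powr (- (p0 - p)))"
    unfolding reweighted_def using weight_nonneg by (intro sum_mono mult_left_mono) auto
  then show ?thesis by (simp add: sum_distrib_right mult.commute)
qed

lemma sum_dual_reweighted_le:
  defines "\<theta> \<equiv> (p - 1) / (p0 - 1)"
  shows "sum (dual_weight p0 reweighted) {1..n} \<le> sum \<sigma> {1..n} powr \<theta> * sum rdf {1..n} powr (1 - \<theta>)"
proof -
  have "0 < \<theta>" "\<theta> < 1" using p_gt_1 p_less_p0 by (auto simp: \<theta>_def)
  have "dual_weight p0 reweighted k = \<sigma> k powr \<theta> * rdf k powr (1 - \<theta>)" if "k \<in> {1..n}" for k
  proof -
    have "0 < w k" "0 < rdf k" using that weight_pos rdf_positive by auto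
    moreover have "- (p0 - p) * (- 1 / (p0 - 1)) = 1 - \<theta>" "- 1 / (p - 1) * \<theta> = - 1 / (p0 - 1)"
      using p_gt_1 p_less_p0 by (auto simp: \<theta>_def field_simps)
    ultimately show ?thesis
      by (simp add: dual_weight_def reweighted_def powr_mult powr_powr)
  qed
  then have "sum (dual_weight p0 reweighted) {1..n} = (\<Sum>k=1..n. \<sigma> k powr \<theta> * rdf k powr (1 - \<theta>))"
    by (rule sum.cong[OF refl])
  also have "\<dots> \<le> sum \<sigma> {1..n} powr \<theta> * sum rdf {1..n} powr (1 - \<theta>)"
    using \<open>0 < \<theta>\<close> \<open>\<theta> < 1\<close> rdf_nonneg by (intro holder_sum_powr) (auto simp: dual_weight_def)
  finally show ?thesis .
qed

lemma dual_average_reweighted_le: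
  assumes "1 \<le> n"
  shows "(sum (dual_weight p0 reweighted) {1..n} / real n) powr (p0 - 1)
     \<le> (sum \<sigma> {1..n} / real n) powr (p - 1) * avg rdf n powr (p0 - p)"
proof -
  define \<theta> where "\<theta> = (p - 1) / (p0 - 1)"
  have "0 < real n" using assms by simp
  have "0 \<le> sum \<sigma> {1..n}" by (simp add: sum_nonneg dual_weight_def)
  have "sum (dual_weight p0 reweighted) {1..n} / real n
      \<le> sum \<sigma> {1..n} powr \<theta> * sum rdf {1..n} powr (1 - \<theta>) / (real n powr \<theta> * real n powr (1 - \<theta>))"
    using sum_dual_reweighted_le[of n] \<open>0 < real n\<close> by (simp add: \<theta>_def divide_right_mono flip: powr_add)
  also have "\<dots> = (sum \<sigma> {1..n} / real n) powr \<theta> * avg rdf n powr (1 - \<theta>)"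
    using \<open>0 < real n\<close> \<open>0 \<le> sum \<sigma> {1..n}\<close> rdf_nonneg
    by (simp add: powr_divide avg_rdf_eq sum_nonneg)
  finally have "(sum (dual_weight p0 reweighted) {1..n} / real n) powr (p0 - 1)
      \<le> ((sum \<sigma> {1..n} / real n) powr \<theta> * avg rdf n powr (1 - \<theta>)) powr (p0 - 1)"
    using p_gt_1 p_less_p0 by (intro powr_mono2) (auto intro!: divide_nonneg_nonneg sum_nonneg simp: dual_weight_def)
  also have "\<dots> = (sum \<sigma> {1..n} / real n) powr (p - 1) * avg rdf n powr (p0 - p)"
  proof -
    have "\<theta> * (p0 - 1) = p - 1" "(1 - \<theta>) * (p0 - 1) = p0 - p"
      using p_gt_1 p_less_p0 by (auto simp: \<theta>_def field_simps)
    then show ?thesis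
      using \<open>0 \<le> sum \<sigma> {1..n}\<close> avg_rdf_pos[OF assms] by (simp add: powr_mult powr_powr)
  qed
  finally show ?thesis .
qed

lemma Ap_average_reweighted_le:
  assumes "1 \<le> n"
  shows "(sum reweighted {1..n} / real n) * (sum (dual_weight p0 reweighted) {1..n} / real n) powr (p0 - 1)
     \<le> (2 * Mnorm) powr (p0 - p) * Ap"
proof -
  define a where "a = avg rdf n"
  have "0 < a" unfolding a_def using avg_rdf_pos[OF assms] .
  have "0 < sum w {1..n}" using assms weight_pos by (intro sum_pos) auto
  have "(sum reweighted {1..n} / real n) * (sum (dual_weight p0 reweighted) {1..n} / real n) powr (p0 - 1)
      \<le> ((a / (2 * Mnorm)) powr (- (p0 - p)) * sum w {1..n} / real n)
         * ((sum \<sigma> {1..n} / real n) powr (p - 1) * a powr (p0 - p))"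
    using sum_reweighted_le[OF assms] dual_average_reweighted_le[OF assms] assms reweighted_pos
      \<open>0 < a\<close> Mnorm_ge_1 \<open>0 < sum w {1..n}\<close>
    by (intro mult_mono divide_right_mono) (auto simp: a_def intro!: sum_nonneg less_imp_le)
  also have "\<dots> = ((a / (2 * Mnorm)) powr (- (p0 - p)) * a powr (p0 - p))
      * ((sum w {1..n} / real n) * (sum \<sigma> {1..n} / real n) powr (p - 1))"
    by (simp add: field_simps)
  also have "(a / (2 * Mnorm)) powr (- (p0 - p)) * a powr (p0 - p) = (2 * Mnorm) powr (p0 - p)"
  proof -
    have "(a / (2 * Mnorm)) powr (- (p0 - p)) = 1 / (a / (2 * Mnorm)) powr (p0 - p)"
      by (rule powr_minus_divide)
    also have "\<dots> = (2 * Mnorm) powr (p0 - p) / a powr (p0 - p)"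
      using \<open>0 < a\<close> Mnorm_ge_1 by (simp add: powr_divide)
    finally show ?thesis using \<open>0 < a\<close> by simp
  qed
  also have "(2 * Mnorm) powr (p0 - p) * ((sum w {1..n} / real n) * (sum \<sigma> {1..n} / real n) powr (p - 1))
      \<le> (2 * Mnorm) powr (p0 - p) * Ap"
    using Ap_average_le[OF assms] by (intro mult_left_mono) auto
  finally show ?thesis .
qed

lemma Ap_const_reweighted_le: "Ap_const p0 reweighted \<le> ereal ((2 * Mnorm) powr (p0 - p) * Ap)"
  unfolding Ap_const_def[of p0] using Ap_average_reweighted_le
  by (intro SUP_least) (auto simp: dual_weight_def)

lemma in_Ap_reweighted: "in_Ap p0 reweighted"
  unfolding in_Ap_def is_weight_def using reweighted_pos Ap_const_reweighted_le
  by (auto intro: le_less_trans)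

lemma lp_sum_reweighted_le:
  assumes g_le: "\<And>k. 1 \<le> k \<Longrightarrow> \<bar>g k\<bar> \<le> s * rdf k" and "0 \<le> s" and g: "lp_summable p w g"
  shows "lp_summable p0 reweighted g" "lp_sum p0 reweighted g \<le> s powr (p0 - p) * lp_sum p w g"
proof -
  have term_le: "reweighted k * \<bar>g k\<bar> powr p0 \<le> s powr (p0 - p) * (w k * \<bar>g k\<bar> powr p)" if "1 \<le> k" for k
  proof -
    have "0 < rdf k" using rdf_positive that by blast
    have "\<bar>g k\<bar> powr p0 = \<bar>g k\<bar> powr p * \<bar>g k\<bar> powr (p0 - p)" by (simp flip: powr_add)
    also have "\<dots> \<le> \<bar>g k\<bar> powr p * (s powr (p0 - p) * rdf k powr (p0 - p))"
      using g_le[OF that] p_less_p0 \<open>0 \<le> s\<close> \<open>0 < rdf k\<close>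
      by (intro mult_left_mono) (auto simp flip: powr_mult intro: powr_mono2)
    finally have "reweighted k * \<bar>g k\<bar> powr p0
        \<le> reweighted k * (\<bar>g k\<bar> powr p * (s powr (p0 - p) * rdf k powr (p0 - p)))"
      using reweighted_pos[OF that] by (intro mult_left_mono) auto
    also have "\<dots> = s powr (p0 - p) * (w k * \<bar>g k\<bar> powr p) * (rdf k powr (- (p0 - p)) * rdf k powr (p0 - p))"
      by (simp add: reweighted_def mult_ac)
    finally show ?thesis using \<open>0 < rdf k\<close> by (simp flip: powr_add)
  qed
  have "(\<Sum>j\<in>{1..<n}. reweighted j * \<bar>g j\<bar> powr p0) \<le> s powr (p0 - p) * lp_sum p w g" for n
  proof -
    have "(\<Sum>j\<in>{1..<n}. reweighted j * \<bar>g j\<bar> powr p0) \<le> s powr (p0 - p) * (\<Sum>j\<in>{1..<n}. w j * \<bar>g j\<bar> powr p)"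
      unfolding sum_distrib_left using term_le by (intro sum_mono) auto
    also have "\<dots> \<le> s powr (p0 - p) * lp_sum p w g"
      using g weight_nonneg by (intro mult_left_mono partial_sum_le_lp_sum) auto
    finally show ?thesis .
  qed
  then show "lp_summable p0 reweighted g" "lp_sum p0 reweighted g \<le> s powr (p0 - p) * lp_sum p w g"
    using lp_sum_le_of_partial_sums_le[of reweighted] reweighted_nonneg by auto
qed

lemma lp_sum_le_reweighted:
  assumes f: "lp_summable p0 reweighted f"
  shows "lp_summable p w f" "lp_sum p w f \<le> lp_sum p0 reweighted f powr (p / p0) * (2 powr p) powr (1 - p / p0)"
proof -
  define t where "t = p / p0"
  have "0 < t" "t < 1" using p_gt_1 p_less_p0 by (auto simp: t_def)
  have split: "w k * \<bar>f k\<bar> powr p = (reweighted k * \<bar>f k\<bar> powr p0) powr t * (w k * rdf k powr p) powr (1 - t)"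
    if "1 \<le> k" for k
  proof -
    have "0 < w k" "0 < rdf k" using weight_pos rdf_positive that by auto
    have exps: "p0 * t = p" "- (p0 - p) * t + p * (1 - t) = 0"
      using p_gt_1 p_less_p0 by (auto simp: t_def field_simps)
    have "(reweighted k * \<bar>f k\<bar> powr p0) powr t * (w k * rdf k powr p) powr (1 - t)
        = (w k powr t * w k powr (1 - t)) * (rdf k powr (- (p0 - p) * t) * rdf k powr (p * (1 - t)))
          * \<bar>f k\<bar> powr (p0 * t)"
      using \<open>0 < w k\<close> \<open>0 < rdf k\<close> by (simp add: reweighted_def powr_mult powr_powr mult_ac)
    also have "\<dots> = w k * \<bar>f k\<bar> powr p"
      using \<open>0 < w k\<close> \<open>0 < rdf k\<close> exps by (simp flip: powr_add)
    finally show ?thesis ..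
  qed
  have "(\<Sum>j\<in>{1..<n}. w j * \<bar>f j\<bar> powr p) \<le> lp_sum p0 reweighted f powr t * (2 powr p) powr (1 - t)" for n
  proof -
    have "(\<Sum>j\<in>{1..<n}. w j * \<bar>f j\<bar> powr p)
        = (\<Sum>j\<in>{1..<n}. (reweighted j * \<bar>f j\<bar> powr p0) powr t * (w j * rdf j powr p) powr (1 - t))"
      using split by (intro sum.cong) auto
    also have "\<dots> \<le> (\<Sum>j\<in>{1..<n}. reweighted j * \<bar>f j\<bar> powr p0) powr t * (\<Sum>j\<in>{1..<n}. w j * rdf j powr p) powr (1 - t)"
      using \<open>0 < t\<close> \<open>t < 1\<close> weight_nonneg
      by (intro holder_sum_powr) (auto intro!: mult_nonneg_nonneg reweighted_nonneg)
    also have "\<dots> \<le> lp_sum p0 reweighted f powr t * (2 powr p) powr (1 - t)"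
      using partial_sum_le_lp_sum[OF f reweighted_nonneg, of n] rdf_lp_bound[of n] \<open>0 < t\<close> \<open>t < 1\<close>
        weight_nonneg reweighted_nonneg
      by (intro mult_mono powr_mono2) (auto intro!: sum_nonneg mult_nonneg_nonneg)
    finally show ?thesis .
  qed
  then show "lp_summable p w f" "lp_sum p w f \<le> lp_sum p0 reweighted f powr (p / p0) * (2 powr p) powr (1 - p / p0)"
    using lp_sum_le_of_partial_sums_le[of w] weight_nonneg unfolding t_def by auto
qed

lemma wnorm_le_wnorm_reweighted: "wnorm p w f \<le> ereal (2 powr ((p0 - p) / p0)) * wnorm p0 reweighted f"
proof (cases "lp_summable p0 reweighted f")
  case True
  define F where "F = lp_sum p0 reweighted f"
  have "0 \<le> F" unfolding F_def using lp_sum_nonneg[OF reweighted_nonneg True] .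
  have summable: "lp_summable p w f" and "lp_sum p w f \<le> F powr (p / p0) * (2 powr p) powr (1 - p / p0)"
    using lp_sum_le_reweighted[OF True] unfolding F_def by auto
  then have "lp_sum p w f powr (1 / p) \<le> (F powr (p / p0) * (2 powr p) powr (1 - p / p0)) powr (1 / p)"
    using lp_sum_nonneg[OF weight_nonneg summable] p_gt_1 by (intro powr_mono2) auto
  also have "\<dots> = 2 powr ((p0 - p) / p0) * F powr (1 / p0)"
  proof -
    have "(F powr (p / p0)) powr (1 / p) = F powr (1 / p0)"
      using p_gt_1 by (simp add: powr_powr)
    moreover have "p * (1 - p / p0) * (1 / p) = (p0 - p) / p0"
      using p_gt_1 p_less_p0 by (simp add: field_simps)
    then have "((2 powr p) powr (1 - p / p0)) powr (1 / p) = (2::real) powr ((p0 - p) / p0)"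
      by (simp only: powr_powr)
    ultimately show ?thesis by (simp add: powr_mult)
  qed
  finally show ?thesis using summable True by (simp add: wnorm_eq F_def)
qed (simp add: wnorm_eq)

lemma wnorm_reweighted_le:
  assumes g_le: "\<And>k. 1 \<le> k \<Longrightarrow> \<bar>g k\<bar> \<le> s * rdf k" and "0 \<le> s"
    and g: "lp_summable p w g" and "lp_sum p w g \<le> s powr p"
  shows "wnorm p0 reweighted g \<le> ereal s"
proof -
  have summable: "lp_summable p0 reweighted g"
    using lp_sum_reweighted_le(1)[OF g_le \<open>0 \<le> s\<close> g] .
  have "lp_sum p0 reweighted g \<le> s powr (p0 - p) * lp_sum p w g"
    using lp_sum_reweighted_le(2)[OF g_le \<open>0 \<le> s\<close> g] .
  also have "\<dots> \<le> s powr (p0 - p) * s powr p"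
    using \<open>lp_sum p w g \<le> s powr p\<close> by (intro mult_left_mono) auto
  also have "\<dots> = s powr p0"
    using \<open>0 \<le> s\<close> by (cases "s = 0") (auto simp flip: powr_add)
  finally have "lp_sum p0 reweighted g powr (1 / p0) \<le> (s powr p0) powr (1 / p0)"
    using lp_sum_nonneg[OF reweighted_nonneg summable] p_gt_1 p_less_p0 by (intro powr_mono2) auto
  also have "\<dots> = s" using \<open>0 \<le> s\<close> p_gt_1 p_less_p0 by (simp add: powr_powr)
  finally show ?thesis using summable by (simp add: wnorm_eq)
qed

lemma wnorm_le_by_reweighting:
  fixes \<phi> :: "real \<Rightarrow> real"
  assumes \<phi>_pos: "\<forall>t\<ge>1. 0 < \<phi> t" and \<phi>_mono: "mono_on {1..} \<phi>"
    and hyp: "wnorm p0 reweighted f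
      \<le> ereal (\<phi> (real_of_ereal (Ap_const p0 reweighted))) * wnorm p0 reweighted g"
    and g_le: "\<And>k. 1 \<le> k \<Longrightarrow> \<bar>g k\<bar> \<le> s * rdf k" and "0 \<le> s"
    and g: "lp_summable p w g" and "lp_sum p w g \<le> s powr p"
  shows "wnorm p w f \<le> ereal (2 powr ((p0 - p) / p0) * \<phi> ((2 * Mnorm) powr (p0 - p) * Ap) * s)"
proof -
  define A0 where "A0 = real_of_ereal (Ap_const p0 reweighted)"
  have "1 \<le> Ap_const p0 reweighted"
    using Ap_const_ge_1 in_Ap_reweighted p_gt_1 p_less_p0 unfolding in_Ap_def by auto
  then have "1 \<le> A0" "A0 \<le> (2 * Mnorm) powr (p0 - p) * Ap"
    using Ap_const_reweighted_le unfolding A0_def by (cases "Ap_const p0 reweighted"; simp)+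
  then have "\<phi> A0 \<le> \<phi> ((2 * Mnorm) powr (p0 - p) * Ap)" "0 < \<phi> A0"
    using \<phi>_mono \<phi>_pos by (auto intro: mono_onD)
  have "wnorm p w f \<le> ereal (2 powr ((p0 - p) / p0)) * wnorm p0 reweighted f"
    by (rule wnorm_le_wnorm_reweighted)
  also have "\<dots> \<le> ereal (2 powr ((p0 - p) / p0)) * (ereal (\<phi> A0) * wnorm p0 reweighted g)"
    using hyp unfolding A0_def by (intro ereal_mult_left_mono) auto
  also have "\<dots> \<le> ereal (2 powr ((p0 - p) / p0)) * (ereal (\<phi> ((2 * Mnorm) powr (p0 - p) * Ap)) * ereal s)"
    using \<open>\<phi> A0 \<le> _\<close> \<open>0 < \<phi> A0\<close> wnorm_reweighted_le[OF g_le \<open>0 \<le> s\<close> g \<open>lp_sum p w g \<le> _\<close>] \<open>0 \<le> s\<close>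
    by (intro ereal_mult_left_mono ereal_mult_mono) (auto simp: wnorm_nonneg)
  finally show ?thesis by (simp add: mult.assoc)
qed

end

lemma (in Ap_weight) extrapolation_nonzero_case:
  fixes \<phi> :: "real \<Rightarrow> real"
  assumes "p < p0" and \<phi>_pos: "\<forall>t\<ge>1. 0 < \<phi> t" and \<phi>_mono: "mono_on {1..} \<phi>"
    and hyp: "\<forall>w0. in_Ap p0 w0 \<longrightarrow>
      wnorm p0 w0 f \<le> ereal (\<phi> (real_of_ereal (Ap_const p0 w0))) * wnorm p0 w0 g"
    and g: "lp_summable p w g" and "0 < lp_sum p w g"
  shows "wnorm p w f \<le> ereal (2 powr ((p0 - p) / p0) * \<phi> ((2 * Mnorm) powr (p0 - p) * Ap)) * wnorm p w g"
proof -
  define s where "s = lp_sum p w g powr (1 / p)"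
  define h where "h = (\<lambda>k. \<bar>g k\<bar> / s)"
  have "0 < s" using \<open>0 < lp_sum p w g\<close> by (simp add: s_def)
  have "s powr p = lp_sum p w g"
    using \<open>0 < lp_sum p w g\<close> p_gt_1 by (simp add: s_def powr_powr)
  have "lp_summable p w (\<lambda>k. \<bar>g k\<bar>)" "lp_sum p w (\<lambda>k. \<bar>g k\<bar>) = lp_sum p w g"
    using g by (simp_all add: lp_summable_def lp_sum_def)
  then have "lp_summable p w h" "lp_sum p w h = 1"
    using lp_sum_divide[OF \<open>0 < s\<close>, of p w "\<lambda>k. \<bar>g k\<bar>"] \<open>s powr p = _\<close> \<open>0 < lp_sum p w g\<close>
    by (simp_all add: h_def)
  moreover have "\<exists>j\<ge>1. 0 < h j"
    using \<open>0 < lp_sum p w g\<close> lp_sum_eq_0_iff[OF g weight_pos] \<open>0 < s\<close> by (auto simp: h_def)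
  ultimately interpret extrapolation p w h p0
    using \<open>p < p0\<close> \<open>0 < s\<close> by unfold_locales (auto simp: h_def)
  have "\<bar>g k\<bar> \<le> s * rdf k" if "1 \<le> k" for k
    using h_le_rdf[OF that] \<open>0 < s\<close> by (simp add: h_def field_simps)
  then have "wnorm p w f \<le> ereal (2 powr ((p0 - p) / p0) * \<phi> ((2 * Mnorm) powr (p0 - p) * Ap) * s)"
    using \<phi>_pos \<phi>_mono hyp in_Ap_reweighted g \<open>0 < s\<close> \<open>s powr p = _\<close>
    by (intro wnorm_le_by_reweighting) auto
  then show ?thesis using g by (simp add: wnorm_eq s_def)
qed

theorem theorem3p1:
  fixes p p0 :: real and f g :: "nat \<Rightarrow> real" and \<phi> :: "real \<Rightarrow> real"
  assumes "1 < p" and "p < p0"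
    and "\<forall>k\<ge>1. f k \<ge> 0" and "\<forall>k\<ge>1. g k \<ge> 0"
    and "\<forall>t\<ge>1. \<phi> t > 0" and "mono_on {1..} \<phi>"
    and "\<forall>w0. in_Ap p0 w0 \<longrightarrow>
           wnorm p0 w0 f \<le> ereal (\<phi> (real_of_ereal (Ap_const p0 w0))) * wnorm p0 w0 g"
    and "in_Ap p w" and "wnorm p w f < \<infinity>"
  shows "wnorm p w f \<le>
     ereal (2 powr ((p0 - p) / p0) *
            \<phi> ((2 * real_of_ereal (maxop_norm p w)) powr (p0 - p) * real_of_ereal (Ap_const p w)))
     * wnorm p w g"
proof -
  interpret Ap_weight p w using assms(1,8) by unfold_locales
  have "1 \<le> (2 * Mnorm) powr (p0 - p)"
    using Mnorm_ge_1 \<open>p < p0\<close> by (intro ge_one_powr_ge_zero) auto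
  then have "0 < \<phi> ((2 * Mnorm) powr (p0 - p) * Ap)"
    using assms(5) Ap_ge_1 mult_mono[of 1 "(2 * Mnorm) powr (p0 - p)" 1 Ap] by simp
  consider "\<not> lp_summable p w g" | "\<forall>k\<ge>1. g k = 0" | "lp_summable p w g" "0 < lp_sum p w g"
  proof (cases "lp_summable p w g")
    case True
    then show ?thesis
      using that lp_sum_nonneg[OF weight_nonneg True] lp_sum_eq_0_iff[OF True weight_pos]
      by (cases "lp_sum p w g = 0") auto
  qed (use that in blast)
  then show ?thesis
  proof cases
    case 1
    then show ?thesis using \<open>0 < \<phi> _\<close> by (simp add: wnorm_eq)
  next
    case 2
    \<comment> \<open>no Rubio de Francia weight can be built from g; the constant weight forces f = 0\<close>
    have "in_Ap p0 (\<lambda>_. 1)" using assms(1,2) by (intro const_in_Ap) simp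
    with assms(7) have "wnorm p0 (\<lambda>_. 1) f
        \<le> ereal (\<phi> (real_of_ereal (Ap_const p0 (\<lambda>_. 1)))) * wnorm p0 (\<lambda>_. 1) g"
      by blast
    then have "\<forall>k\<ge>1. f k = 0" using 2 by (rule vanishing_of_weighted_bound)
    then show ?thesis using \<open>0 < \<phi> _\<close> by (simp add: wnorm_eq lp_sum_zero)
  next
    case 3
    then show ?thesis using extrapolation_nonzero_case[OF assms(2,5,6,7)] by simp
  qed
qed

end
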